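(* Assume the setting described in the context, with $0<\alpha\le m(\lambda-2)/2$. Let $R\in\mathcal{D}$ be a good cube and $i\ge r+1$ an integer with $R^{(i)}\subset Q^*$. Then for every $(x,t)\in W_R$, $$\left(\int_{\mathbb{R}^n}\big|\theta_t(\mathbf{1}_{(R^{(i-1)})^c}\,b_{(R^{(i)})^a})(y)\big|^2\Big(\frac{t}{t+|x-y|}\Big)^{m\lambda}\frac{d\mu(y)}{t^m}\right)^{1/2}\le C\,2^{-\alpha i/2},$$ where $C$ is independent of $R,i,x,t$.
   Context: Measure and kernel: $n\ge1$, $m>0$; $\mu$ is a Borel measure on $\mathbb{R}^n$ with $\mu(B(x,r))\le C r^m$ for all $x$, $r>0$; distances, balls and cubes use the $\ell^\infty$ metric $|x-y|=\max_i|x_i-y_i|$. Fix $\lambda>2$ and $\alpha>0$. The kernel $s_t:\mathbb{R}^n\times\mathbb{R}^n\to\mathbb{C}$ ($t>0$) satisfies $|s_t(x,y)|\le C t^\alpha/(t+|x-y|)^{m+\alpha}$ and $|s_t(x,y)-s_t(x,y')|\le C|y-y'|^\alpha/(t+|x-y|)^{m+\alpha}$ whenever $|y-y'|<t/2$; $\theta_t f(y)=\int s_t(y,z)f(z)\,d\mu(z)$. Dyadic grid: for a fixed sequence $\beta=(\beta_j)_{j\in\mathbb{Z}}$, $\beta_j\in\{0,1\}^n$, let $\mathcal{D}=\bigcup_{k\in\mathbb{Z}}\mathcal{D}_k$, $\mathcal{D}_k=\{2^k([0,1)^n+v)+\sum_{j<k}2^j\beta_j: v\in\mathbb{Z}^n\}$.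 For $Q\in\mathcal{D}$, $\ell(Q)$ is its side length and $Q^{(k)}$ the unique cube of $\mathcal{D}$ with $\ell(Q^{(k)})=2^k\ell(Q)$ and $Q\subset Q^{(k)}$. Fix an integer $r\ge1$ and $\gamma\in(0,1/2)$ with $\gamma\le \frac{\alpha}{2(m+\alpha)}$ and $\frac{m\gamma}{1-\gamma}\le\frac{\alpha}{4}$. A cube $I\in\mathcal{D}$ is bad if there is $J\in\mathcal{D}$ with $\ell(J)\ge 2^r\ell(I)$ and $\operatorname{dist}(I,\partial J)\le\ell(I)^\gamma\ell(J)^{1-\gamma}$; otherwise it is good. $W_R=R\times(\ell(R)/2,\ell(R)]$. Testing functions and stopping cubes: let $1<p\le2$, $p'=p/(p-1)$. For each cube $Q$ let $b_Q$ satisfy $\operatorname{supp}b_Q\subset Q$, $\langle b_Q\rangle_Q=1$ and $\|b_Q\|^p_{L^p(\mu)}\le A\mu(Q)$, where $\langle h\rangle_Q=\mu(Q)^{-1}\int_Q h\,d\mu$ and $A$ is a fixed constant. Fix $s\in\mathbb{Z}$ and $Q^*\in\mathcal{D}$ with $\ell(Q^* )=2^s$. Stopping cubes: $\mathcal{F}^0=\{Q^*\}$; given $\mathcal{F}^j$, $\mathcal{F}^{j+1}$ consists, for each $F\in\mathcal{F}^j$, of the maximal cubes $Q\in\mathcal{D}$, $Q\subsetneq F$, with $|\langle b_F\rangle_Q|<1/2$ or $\langle|b_F|^p\rangle_Q>2^{p'+1}A^{p'}$; $\mathcal{F}_{Q^*}=\bigcup_j\mathcal{F}^j$. For $Q\in\mathcal{D}$,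 $Q\subset Q^*$, $Q^a$ is the minimal $F\in\mathcal{F}_{Q^*}$ with $Q\subset F$. *)

theory Defs
  imports "HOL-Analysis.Analysis"
begin

definition linf_dist :: "real^'n \<Rightarrow> real^'n \<Rightarrow> real" where
  "linf_dist x y = (MAX i\<in>UNIV. \<bar>x$i - y$i\<bar>)"

definition linf_ball :: "real^'n \<Rightarrow> real \<Rightarrow> (real^'n) set" where
  "linf_ball x r = {y. linf_dist x y < r}"

definition linf_setdist :: "(real^'n) set \<Rightarrow> (real^'n) set \<Rightarrow> real" where
  "linf_setdist A B = Inf {linf_dist a b | a b. a \<in> A \<and> b \<in> B}"

text \<open>shift vector  sum_{j<k} 2^j beta_j  (component i)\<close>
definition dy_shift :: "(int \<Rightarrow> real^'n) \<Rightarrow> int \<Rightarrow> 'n \<Rightarrow> real" where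
  "dy_shift \<beta> k i = (\<Sum>l. 2 powr (real_of_int (k - 1 - int l)) * (\<beta> (k - 1 - int l) $ i))"

definition dy_cube :: "(int \<Rightarrow> real^'n) \<Rightarrow> int \<Rightarrow> int^'n \<Rightarrow> (real^'n) set" where
  "dy_cube \<beta> k v = {x. \<forall>i. 2 powr (real_of_int k) * real_of_int (v$i) + dy_shift \<beta> k i \<le> x$i
                          \<and> x$i < 2 powr (real_of_int k) * (real_of_int (v$i) + 1) + dy_shift \<beta> k i}"

definition dy_level_grid :: "(int \<Rightarrow> real^'n) \<Rightarrow> int \<Rightarrow> (real^'n) set set" where
  "dy_level_grid \<beta> k = range (dy_cube \<beta> k)"

definition dy_grid :: "(int \<Rightarrow> real^'n) \<Rightarrow> (real^'n) set set" where
  "dy_grid \<beta> = (\<Union>k. dy_level_grid \<beta> k)"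

definition dy_level :: "(int \<Rightarrow> real^'n) \<Rightarrow> (real^'n) set \<Rightarrow> int" where
  "dy_level \<beta> Q = (THE k. Q \<in> dy_level_grid \<beta> k)"

definition side :: "(int \<Rightarrow> real^'n) \<Rightarrow> (real^'n) set \<Rightarrow> real" where
  "side \<beta> Q = 2 powr (real_of_int (dy_level \<beta> Q))"

definition dy_anc :: "(int \<Rightarrow> real^'n) \<Rightarrow> (real^'n) set \<Rightarrow> nat \<Rightarrow> (real^'n) set" where
  "dy_anc \<beta> Q k = (THE P. P \<in> dy_level_grid \<beta> (dy_level \<beta> Q + int k) \<and> Q \<subseteq> P)"

definition dy_bad :: "(int \<Rightarrow> real^'n) \<Rightarrow> nat \<Rightarrow> real \<Rightarrow> (real^'n) set \<Rightarrow> bool" where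
  "dy_bad \<beta> r \<gamma> I \<longleftrightarrow> (\<exists>J\<in>dy_grid \<beta>. side \<beta> J \<ge> 2 ^ r * side \<beta> I \<and>
      linf_setdist I (frontier J) \<le> side \<beta> I powr \<gamma> * side \<beta> J powr (1 - \<gamma>))"

definition dy_good :: "(int \<Rightarrow> real^'n) \<Rightarrow> nat \<Rightarrow> real \<Rightarrow> (real^'n) set \<Rightarrow> bool" where
  "dy_good \<beta> r \<gamma> I \<longleftrightarrow> \<not> dy_bad \<beta> r \<gamma> I"

definition avg :: "'a measure \<Rightarrow> 'a set \<Rightarrow> ('a \<Rightarrow> 'b::{banach,second_countable_topology}) \<Rightarrow> 'b" where
  "avg \<mu> Q h = inverse (measure \<mu> Q) *\<^sub>R (LINT z:Q|\<mu>. h z)"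

definition stop_cond :: "(real^'n) measure \<Rightarrow> ((real^'n) set \<Rightarrow> real^'n \<Rightarrow> complex) \<Rightarrow> real \<Rightarrow> real
    \<Rightarrow> (real^'n) set \<Rightarrow> (real^'n) set \<Rightarrow> bool" where
  "stop_cond \<mu> b A p F Q \<longleftrightarrow>
     cmod (avg \<mu> Q (b F)) < 1/2 \<or>
     avg \<mu> Q (\<lambda>z. cmod (b F z) powr p) > 2 powr (p/(p-1) + 1) * A powr (p/(p-1))"

definition stop_children :: "(real^'n) measure \<Rightarrow> (int \<Rightarrow> real^'n) \<Rightarrow> ((real^'n) set \<Rightarrow> real^'n \<Rightarrow> complex)
    \<Rightarrow> real \<Rightarrow> real \<Rightarrow> (real^'n) set \<Rightarrow> (real^'n) set set" where
  "stop_children \<mu> \<beta> b A p F =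
     {Q \<in> dy_grid \<beta>. Q \<subset> F \<and> stop_cond \<mu> b A p F Q \<and>
        (\<forall>Q'\<in>dy_grid \<beta>. Q \<subset> Q' \<and> Q' \<subset> F \<longrightarrow> \<not> stop_cond \<mu> b A p F Q')}"

fun stop_gen :: "(real^'n) measure \<Rightarrow> (int \<Rightarrow> real^'n) \<Rightarrow> ((real^'n) set \<Rightarrow> real^'n \<Rightarrow> complex)
    \<Rightarrow> real \<Rightarrow> real \<Rightarrow> (real^'n) set \<Rightarrow> nat \<Rightarrow> (real^'n) set set" where
  "stop_gen \<mu> \<beta> b A p Qs 0 = {Qs}"
| "stop_gen \<mu> \<beta> b A p Qs (Suc j) = (\<Union>F\<in>stop_gen \<mu> \<beta> b A p Qs j. stop_children \<mu> \<beta> b A p F)"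

definition stop_family :: "(real^'n) measure \<Rightarrow> (int \<Rightarrow> real^'n) \<Rightarrow> ((real^'n) set \<Rightarrow> real^'n \<Rightarrow> complex)
    \<Rightarrow> real \<Rightarrow> real \<Rightarrow> (real^'n) set \<Rightarrow> (real^'n) set set" where
  "stop_family \<mu> \<beta> b A p Qs = (\<Union>j. stop_gen \<mu> \<beta> b A p Qs j)"

definition stop_parent :: "(real^'n) measure \<Rightarrow> (int \<Rightarrow> real^'n) \<Rightarrow> ((real^'n) set \<Rightarrow> real^'n \<Rightarrow> complex)
    \<Rightarrow> real \<Rightarrow> real \<Rightarrow> (real^'n) set \<Rightarrow> (real^'n) set \<Rightarrow> (real^'n) set" where
  "stop_parent \<mu> \<beta> b A p Qs Q =
     (THE F. F \<in> stop_family \<mu> \<beta> b A p Qs \<and> Q \<subseteq> F \<and>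
        (\<forall>F'\<in>stop_family \<mu> \<beta> b A p Qs. Q \<subseteq> F' \<longrightarrow> F \<subseteq> F'))"

definition theta :: "(real^'n) measure \<Rightarrow> (real \<Rightarrow> real^'n \<Rightarrow> real^'n \<Rightarrow> complex) \<Rightarrow> real
    \<Rightarrow> (real^'n \<Rightarrow> complex) \<Rightarrow> real^'n \<Rightarrow> complex" where
  "theta \<mu> s t f y = (LINT z|\<mu>. s t y z * f z)"

end

theory Submission
  imports Defs "HOL-Real_Asymp.Real_Asymp"
begin

text \<open>
  Let \<open>b\<close> be the testing function of the stopping parent of \<open>R^(i)\<close> and \<open>f\<close> its restriction to
  the complement of \<open>R^(i-1)\<close>. Two facts about the ancestors \<open>R^(j)\<close> drive the proof. Goodness of
  \<open>R\<close> puts every point outside \<open>R^(j)\<close>, \<open>j \<ge> r\<close>, at distance more than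
  \<open>\<rho>_j = \<ell>(R) 2^(j(1-\<gamma>))\<close> from \<open>x \<in> R\<close>. The cubes strictly between \<open>R^(i)\<close> and its stopping
  parent are not stopping cubes, so \<open>|b|^p\<close> has bounded averages on every \<open>R^(j)\<close>, \<open>j \<ge> i\<close>, and
  the growth of \<open>\<mu>\<close> gives \<open>\<integral>_{R^(j)} |b| \<le> K (2^j \<ell>(R))^m\<close> for a constant \<open>K\<close>.

  Bound \<open>|\<theta>_t f(y)|\<close> by \<open>\<integral> |s_t(y,z)| |f(z)| d\<mu>(z)\<close> and split the integral. Where
  \<open>|x - z| \<ge> 2|x - y|\<close> the kernel is dominated by \<open>t^\<alpha> / (t + |x - z|)^(m+\<alpha>)\<close>, independently
  of \<open>y\<close>; summing over the annuli \<open>R^(j) - R^(j-1)\<close> bounds this part by a multiple of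
  \<open>2^(-\<alpha> i/2)\<close>, and the weight \<open>(t / (t + |x - y|))^(m\<lambda>) / t^m\<close> has bounded integral. The rest
  vanishes unless \<open>2|x - y| > \<rho>_(i-1)\<close>. On the shell \<open>\<rho>_n < 2|x - y| \<le> \<rho>_(n+1)\<close> it only
  sees \<open>f\<close> on \<open>R^(n+1)\<close> and the weight is at most a multiple of \<open>2^(-n(1-\<gamma>)m\<lambda>)\<close>; Fubini
  handles the integral in \<open>y\<close>, and the shells form a geometric series with ratio
  \<open>2^(-((1-\<gamma>)\<lambda> - 2)m)\<close>, where \<open>((1-\<gamma>)\<lambda> - 2)m \<ge> \<alpha>\<close>.
\<close>

lemma linf_dist_le_iff: "linf_dist x y \<le> c \<longleftrightarrow> (\<forall>i. \<bar>x$i - y$i\<bar> \<le> c)"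
  unfolding linf_dist_def by simp

lemma linf_dist_less_iff: "linf_dist x y < c \<longleftrightarrow> (\<forall>i. \<bar>x$i - y$i\<bar> < c)"
  unfolding linf_dist_def by simp

lemma component_le_linf_dist: "\<bar>x$i - y$i\<bar> \<le> linf_dist x y"
  unfolding linf_dist_def by (rule Max_ge) auto

lemma linf_dist_nonneg: "0 \<le> linf_dist x y"
  using component_le_linf_dist[of x undefined y] by linarith

lemma linf_dist_commute: "linf_dist x y = linf_dist y x"
  unfolding linf_dist_def by (simp add: abs_minus_commute)

lemma linf_dist_triangle: "linf_dist x z \<le> linf_dist x y + linf_dist y z"
  unfolding linf_dist_le_iff
proof
  fix i
  have "\<bar>x$i - z$i\<bar> \<le> \<bar>x$i - y$i\<bar> + \<bar>y$i - z$i\<bar>" by simp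
  also have "\<dots> \<le> linf_dist x y + linf_dist y z" by (intro add_mono component_le_linf_dist)
  finally show "\<bar>x$i - z$i\<bar> \<le> linf_dist x y + linf_dist y z" .
qed

lemma borel_measurable_linf_dist [measurable (raw)]:
  assumes [measurable]: "f \<in> borel_measurable M" "g \<in> borel_measurable M"
  shows "(\<lambda>w. linf_dist (f w) (g w :: real^'n)) \<in> borel_measurable M"
proof -
  have [measurable]: "(\<lambda>w. f w $ i) \<in> borel_measurable M" "(\<lambda>w. g w $ i) \<in> borel_measurable M" for i
  proof -
    have "(\<lambda>v::real^'n. v $ i) \<in> borel_measurable borel"
      by (intro borel_measurable_continuous_onI continuous_on_component continuous_on_id)
    from measurable_compose[OF assms(1) this] measurable_compose[OF assms(2) this]
    show "(\<lambda>w. f w $ i) \<in> borel_measurable M" "(\<lambda>w. g w $ i) \<in> borel_measurable M" .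
  qed
  show ?thesis unfolding linf_dist_def by measurable
qed

lemma linf_ball_borel [measurable]: "linf_ball x r \<in> sets borel"
  unfolding linf_ball_def by measurable

lemma linf_dist_closed_segment_le:
  assumes "w \<in> closed_segment x z"
  shows "linf_dist x w \<le> linf_dist x (z::real^'n)"
proof -
  obtain u where u: "0 \<le> u" "u \<le> 1" "w = (1 - u) *\<^sub>R x + u *\<^sub>R z"
    using assms in_segment(1) by blast
  show ?thesis unfolding linf_dist_le_iff
  proof
    fix i
    have "w$i = (1 - u) * x$i + u * z$i"
      using u(3) by simp
    then have "x$i - w$i = u * (x$i - z$i)"
      by (simp add: algebra_simps)
    then have "\<bar>x$i - w$i\<bar> = u * \<bar>x$i - z$i\<bar>"
      using u(1) by (simp add: abs_mult)
    also have "\<dots> \<le> \<bar>x$i - z$i\<bar>"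
      using u by (simp add: mult_left_le_one_le)
    also have "\<dots> \<le> linf_dist x z"
      by (rule component_le_linf_dist)
    finally show "\<bar>x$i - w$i\<bar> \<le> linf_dist x z" .
  qed
qed

lemma linf_setdist_le:
  assumes "a \<in> S" "c \<in> T"
  shows "linf_setdist S T \<le> linf_dist a c"
  unfolding linf_setdist_def
  by (rule cInf_lower) (use assms linf_dist_nonneg in \<open>auto intro!: bdd_belowI[of _ 0]\<close>)

lemma eventually_le_two_powr:
  assumes "0 < c"
  shows "eventually (\<lambda>j. D \<le> 2 powr (real j * c)) sequentially"
proof -
  have "filterlim (\<lambda>j::nat. 2 powr (real j * c)) at_top at_top"
    using assms by real_asymp
  then show ?thesis by (simp add: filterlim_at_top)
qed

section \<open>Dyadic cubes and stopping cubes\<close>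

locale dyadic_grid =
  fixes \<beta> :: "int \<Rightarrow> real^'n"
  assumes shift_binary: "\<And>j i. \<beta> j $ i \<in> {0, 1}"
begin

lemma of_int_floor_shift [simp]: "real_of_int \<lfloor>\<beta> j $ i\<rfloor> = \<beta> j $ i"
  using shift_binary[of j i] by auto

lemma summable_shift: "summable (\<lambda>l. 2 powr (real_of_int (k - int l)) * \<beta> (k - int l) $ i)"
proof (rule summable_comparison_test)
  show "summable (\<lambda>l. 2 powr real_of_int k * (1/2)^l)"
    by (intro summable_mult summable_geometric) simp
  have "2 powr (real_of_int (k - int l)) = 2 powr real_of_int k * (1/2)^l" for l
    by (simp add: powr_diff powr_realpow power_one_over)
  moreover have "\<bar>\<beta> j $ i\<bar> \<le> 1" for j
    using shift_binary[of j i] by auto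
  ultimately show "\<exists>N. \<forall>l\<ge>N. norm (2 powr (real_of_int (k - int l)) * \<beta> (k - int l) $ i)
      \<le> 2 powr real_of_int k * (1/2)^l"
    by (auto simp: abs_mult intro!: mult_left_le)
qed

lemma dy_shift_succ: "dy_shift \<beta> (k + 1) i = dy_shift \<beta> k i + 2 powr (real_of_int k) * \<beta> k $ i"
proof -
  let ?f = "\<lambda>l. 2 powr (real_of_int (k - int l)) * \<beta> (k - int l) $ i"
  have "dy_shift \<beta> (k + 1) i = suminf ?f" "dy_shift \<beta> k i = (\<Sum>l. ?f (Suc l))"
    unfolding dy_shift_def by (simp_all add: algebra_simps)
  then show ?thesis using suminf_split_head[OF summable_shift] by simp
qed

definition dy_corner :: "int \<Rightarrow> int^'n \<Rightarrow> real^'n" where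
  "dy_corner k v = (\<chi> i. 2 powr (real_of_int k) * real_of_int (v$i) + dy_shift \<beta> k i)"

lemma dy_cube_corner: "dy_cube \<beta> k v =
   {x. \<forall>i. dy_corner k v $ i \<le> x$i \<and> x$i < dy_corner k v $ i + 2 powr (real_of_int k)}"
  unfolding dy_cube_def dy_corner_def by (auto simp: algebra_simps)

lemma dy_corner_in_cube: "dy_corner k v \<in> dy_cube \<beta> k v"
  unfolding dy_cube_corner by auto

lemma dy_cube_same_level_eq:
  assumes "x \<in> dy_cube \<beta> k v" "x \<in> dy_cube \<beta> k w"
  shows "v = w"
proof (subst vec_eq_iff, intro allI)
  fix i
  let ?h = "2 powr real_of_int k"
  have "?h * real_of_int (v$i) < ?h * (real_of_int (w$i) + 1)"
       "?h * real_of_int (w$i) < ?h * (real_of_int (v$i) + 1)"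
    using assms unfolding dy_cube_def by (auto simp: algebra_simps dest!: spec[of _ i])
  then have "real_of_int (v$i) < real_of_int (w$i + 1)" "real_of_int (w$i) < real_of_int (v$i + 1)"
    by (simp_all add: mult_less_cancel_left_pos)
  then show "v$i = w$i" unfolding of_int_less_iff by simp
qed

text \<open>The binary digit \<open>\<beta> k\<close> decides whether a cube of level \<open>k\<close> is the lower or upper half
  of its parent in each coordinate.\<close>
lemma dy_cube_subset_parent:
  "dy_cube \<beta> k v \<subseteq> dy_cube \<beta> (k + 1) (\<chi> i. (v$i - \<lfloor>\<beta> k $ i\<rfloor>) div 2)"
proof
  fix x assume x: "x \<in> dy_cube \<beta> k v"
  show "x \<in> dy_cube \<beta> (k + 1) (\<chi> i. (v$i - \<lfloor>\<beta> k $ i\<rfloor>) div 2)"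
    unfolding dy_cube_def mem_Collect_eq vec_lambda_beta
  proof
    fix i
    let ?h = "2 powr real_of_int k" and ?d = "\<lfloor>\<beta> k $ i\<rfloor>"
    define w where "w = (v$i - ?d) div 2"
    have "2 * w \<le> v$i - ?d" "v$i - ?d \<le> 2 * w + 1"
      unfolding w_def by auto
    then have "real_of_int (2 * w + ?d) \<le> real_of_int (v$i)"
        "real_of_int (v$i + 1) \<le> real_of_int (2 * w + 2 + ?d)"
      unfolding of_int_le_iff by linarith+
    then have "?h * (2 * w + ?d) \<le> ?h * v$i" "?h * (v$i + 1) \<le> ?h * (2 * w + 2 + ?d)"
      by (simp_all add: mult_left_mono del: of_int_floor_shift)
    moreover have "?h * v$i + dy_shift \<beta> k i \<le> x$i" "x$i < ?h * (v$i + 1) + dy_shift \<beta> k i"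
      using x unfolding dy_cube_def by auto
    moreover have "2 powr real_of_int (k + 1) = 2 * ?h"
      by (simp add: powr_add)
    ultimately show "2 powr real_of_int (k + 1) * real_of_int w + dy_shift \<beta> (k + 1) i \<le> x$i \<and>
        x$i < 2 powr real_of_int (k + 1) * (real_of_int w + 1) + dy_shift \<beta> (k + 1) i"
      unfolding dy_shift_succ by (simp add: algebra_simps)
  qed
qed

lemma dy_cube_ancestor_exists: "\<exists>w. dy_cube \<beta> k v \<subseteq> dy_cube \<beta> (k + int j) w"
proof (induction j)
  case (Suc j)
  then obtain w where "dy_cube \<beta> k v \<subseteq> dy_cube \<beta> (k + int j) w" by blast
  moreover have "k + int (Suc j) = k + int j + 1" by simp
  ultimately show ?case
    using dy_cube_subset_parent[of "k + int j" w] by (metis order_trans)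
qed auto

lemma dy_cube_nested:
  assumes "k \<le> k'" "dy_cube \<beta> k v \<inter> dy_cube \<beta> k' w \<noteq> {}"
  shows "dy_cube \<beta> k v \<subseteq> dy_cube \<beta> k' w"
proof -
  obtain u where u: "dy_cube \<beta> k v \<subseteq> dy_cube \<beta> k' u"
    using dy_cube_ancestor_exists[of k v "nat (k' - k)"] assms(1) by auto
  with assms(2) have "u = w" using dy_cube_same_level_eq by blast
  with u show ?thesis by simp
qed

lemma dy_cube_eq_imp_level_eq:
  assumes "dy_cube \<beta> k v = dy_cube \<beta> k' w"
  shows "k = k'"
proof -
  have False if lt: "k < k'" and eq: "dy_cube \<beta> k v = dy_cube \<beta> k' w" for k k' v w
  proof -
    let ?a = "dy_corner k v" and ?b = "dy_corner k' w"
    have "?a \<in> dy_cube \<beta> k' w" "?b \<in> dy_cube \<beta> k v"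
      using eq dy_corner_in_cube by metis+
    then have ab: "?a = ?b" unfolding dy_cube_corner by (auto intro: order_antisym simp: vec_eq_iff)
    define c :: "real^'n" where "c = (\<chi> i. ?a$i + 2 powr real_of_int k)"
    have "2 powr real_of_int k < 2 powr real_of_int k'" using lt by simp
    then have "c \<in> dy_cube \<beta> k' w" unfolding dy_cube_corner c_def ab by auto
    moreover have "c \<notin> dy_cube \<beta> k v" unfolding dy_cube_corner c_def by auto
    ultimately show False using eq by blast
  qed
  with assms show ?thesis by (metis linorder_neqE)
qed

lemma dy_level_cube [simp]: "dy_level \<beta> (dy_cube \<beta> k v) = k"
  unfolding dy_level_def
  by (rule the_equality) (auto simp: dy_level_grid_def dest: dy_cube_eq_imp_level_eq)

lemma side_cube [simp]: "side \<beta> (dy_cube \<beta> k v) = 2 powr real_of_int k"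
  unfolding side_def by simp

lemma dy_anc_cube:
  "\<exists>w. dy_anc \<beta> (dy_cube \<beta> k v) j = dy_cube \<beta> (k + int j) w \<and> dy_cube \<beta> k v \<subseteq> dy_cube \<beta> (k + int j) w"
proof -
  obtain w where w: "dy_cube \<beta> k v \<subseteq> dy_cube \<beta> (k + int j) w"
    using dy_cube_ancestor_exists by blast
  have "dy_anc \<beta> (dy_cube \<beta> k v) j = dy_cube \<beta> (k + int j) w"
    unfolding dy_anc_def dy_level_cube
  proof (rule the_equality)
    fix P assume "P \<in> dy_level_grid \<beta> (k + int j) \<and> dy_cube \<beta> k v \<subseteq> P"
    then obtain u where "P = dy_cube \<beta> (k + int j) u" "dy_corner k v \<in> P"
      using dy_corner_in_cube by (auto simp: dy_level_grid_def)
    then show "P = dy_cube \<beta> (k + int j) w"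
      using w dy_corner_in_cube dy_cube_same_level_eq by blast
  qed (use w in \<open>auto simp: dy_level_grid_def\<close>)
  with w show ?thesis by blast
qed

lemma dy_cube_borel [measurable]: "dy_cube \<beta> k v \<in> sets borel"
proof -
  have "dy_cube \<beta> k v = (\<Inter>i. {x. dy_corner k v $ i \<le> x$i} \<inter> {x. x$i < dy_corner k v $ i + 2 powr real_of_int k})"
    unfolding dy_cube_corner by auto
  also have "\<dots> \<in> sets borel" by measurable
  finally show ?thesis .
qed

lemma dy_cube_subset_linf_ball: "dy_cube \<beta> k v \<subseteq> linf_ball (dy_corner k v) (2 powr real_of_int k)"
proof
  fix y assume y: "y \<in> dy_cube \<beta> k v"
  have "\<bar>dy_corner k v $ i - y$i\<bar> < 2 powr real_of_int k" for i
    using y unfolding dy_cube_corner by (auto dest!: spec[of _ i])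
  then show "y \<in> linf_ball (dy_corner k v) (2 powr real_of_int k)"
    unfolding linf_ball_def linf_dist_less_iff by blast
qed

lemma dy_grid_iff: "Q \<in> dy_grid \<beta> \<longleftrightarrow> (\<exists>k v. Q = dy_cube \<beta> k v)"
  unfolding dy_grid_def dy_level_grid_def by auto

lemma dy_grid_nonempty: "Q \<in> dy_grid \<beta> \<Longrightarrow> Q \<noteq> {}"
  using dy_corner_in_cube unfolding dy_grid_iff by blast

lemma dy_grid_borel: "Q \<in> dy_grid \<beta> \<Longrightarrow> Q \<in> sets borel"
  unfolding dy_grid_iff by auto

lemma side_pos: "0 < side \<beta> Q"
  unfolding side_def by simp

lemma dy_grid_nested:
  assumes "Q \<in> dy_grid \<beta>" "P \<in> dy_grid \<beta>" "dy_level \<beta> Q \<le> dy_level \<beta> P" "Q \<inter> P \<noteq> {}"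
  shows "Q \<subseteq> P"
proof -
  obtain k v k' w where "Q = dy_cube \<beta> k v" "P = dy_cube \<beta> k' w"
    using assms(1,2) unfolding dy_grid_iff by blast
  with assms(3,4) show ?thesis by (simp add: dy_cube_nested)
qed

lemma dy_grid_comparable:
  assumes "Q \<in> dy_grid \<beta>" "P \<in> dy_grid \<beta>" "Q \<inter> P \<noteq> {}"
  shows "Q \<subseteq> P \<or> P \<subseteq> Q"
  using dy_grid_nested[OF assms(1,2)] dy_grid_nested[OF assms(2,1)] assms(3)
  by (metis inf_commute linorder_linear)

lemma dy_grid_psubset_level_less:
  assumes "Q \<in> dy_grid \<beta>" "P \<in> dy_grid \<beta>" "Q \<subset> P"
  shows "dy_level \<beta> Q < dy_level \<beta> P"
proof (rule ccontr)
  assume "\<not> ?thesis"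
  then have "P \<subseteq> Q"
    using dy_grid_nested[OF assms(2,1)] dy_grid_nonempty[OF assms(1)] assms(3) by auto
  with assms(3) show False by blast
qed

lemma dy_anc:
  assumes "Q \<in> dy_grid \<beta>"
  shows dy_anc_in_grid: "dy_anc \<beta> Q j \<in> dy_grid \<beta>"
    and subset_dy_anc: "Q \<subseteq> dy_anc \<beta> Q j"
    and dy_level_anc: "dy_level \<beta> (dy_anc \<beta> Q j) = dy_level \<beta> Q + int j"
    and side_anc: "side \<beta> (dy_anc \<beta> Q j) = 2 powr real j * side \<beta> Q"
proof -
  obtain k v w where "Q = dy_cube \<beta> k v" "dy_anc \<beta> Q j = dy_cube \<beta> (k + int j) w"
      "Q \<subseteq> dy_cube \<beta> (k + int j) w"
    using assms dy_anc_cube unfolding dy_grid_iff by metis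
  then show "dy_anc \<beta> Q j \<in> dy_grid \<beta>" "Q \<subseteq> dy_anc \<beta> Q j"
      "dy_level \<beta> (dy_anc \<beta> Q j) = dy_level \<beta> Q + int j"
      "side \<beta> (dy_anc \<beta> Q j) = 2 powr real j * side \<beta> Q"
    unfolding dy_grid_iff by (auto simp: powr_add)
qed

lemma dy_anc_mono:
  assumes "Q \<in> dy_grid \<beta>" "j \<le> j'"
  shows "dy_anc \<beta> Q j \<subseteq> dy_anc \<beta> Q j'"
  using assms dy_grid_nonempty[OF assms(1)] subset_dy_anc[OF assms(1)]
  by (intro dy_grid_nested dy_anc_in_grid) (auto simp: dy_level_anc, blast)

text \<open>A segment from \<open>x \<in> R\<close> to a point outside \<open>R^(j)\<close> crosses \<open>\<partial>R^(j)\<close>, and goodness of \<open>R\<close>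
  keeps \<open>R\<close> away from that boundary.\<close>
lemma good_far_outside_anc:
  assumes R: "R \<in> dy_grid \<beta>" "dy_good \<beta> r \<gamma> R" and j: "r \<le> j"
    and x: "x \<in> R" and z: "z \<notin> dy_anc \<beta> R j" and \<gamma>: "\<gamma> < 1"
  shows "side \<beta> R * 2 powr (real j * (1 - \<gamma>)) < linf_dist x z"
proof -
  let ?J = "dy_anc \<beta> R j" and ?L = "side \<beta> R"
  have "2 ^ r * ?L \<le> side \<beta> ?J"
    using j side_pos[of R] unfolding side_anc[OF R(1)]
    by (simp add: powr_realpow mult_right_mono power_increasing)
  then have not_close: "\<not> linf_setdist R (frontier ?J) \<le> ?L powr \<gamma> * side \<beta> ?J powr (1 - \<gamma>)"
    using R dy_anc_in_grid[OF R(1)] unfolding dy_good_def dy_bad_def by blast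
  have "?L powr \<gamma> * side \<beta> ?J powr (1 - \<gamma>) = ?L * 2 powr (real j * (1 - \<gamma>))"
    using side_pos[of R] unfolding side_anc[OF R(1)]
    by (simp add: powr_mult powr_powr powr_add[symmetric])
  moreover have "closed_segment x z \<inter> frontier ?J \<noteq> {}"
    using x z subset_dy_anc[OF R(1)] by (intro connected_Int_frontier) auto
  then obtain w where "w \<in> closed_segment x z" "w \<in> frontier ?J" by blast
  then have "linf_setdist R (frontier ?J) \<le> linf_dist x z"
    using linf_setdist_le[OF x] linf_dist_closed_segment_le order_trans by blast
  ultimately show ?thesis using not_close by linarith
qed

lemma good_anc_cover:
  assumes R: "R \<in> dy_grid \<beta>" "dy_good \<beta> r \<gamma> R" and x: "x \<in> R" and \<gamma>: "\<gamma> < 1"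
  shows "\<exists>j. z \<in> dy_anc \<beta> R j"
proof -
  have "eventually (\<lambda>j. linf_dist x z / side \<beta> R \<le> 2 powr (real j * (1 - \<gamma>)) \<and> r \<le> j) sequentially"
    using \<gamma> by (intro eventually_conj eventually_le_two_powr eventually_ge_at_top) simp
  then obtain j where "linf_dist x z / side \<beta> R \<le> 2 powr (real j * (1 - \<gamma>))" "r \<le> j"
    using eventually_happens'[OF trivial_limit_sequentially] by blast
  then have "linf_dist x z \<le> side \<beta> R * 2 powr (real j * (1 - \<gamma>))" "r \<le> j"
    using side_pos[of R] by (simp_all add: divide_le_eq mult.commute)
  then show ?thesis using good_far_outside_anc[OF R _ x _ \<gamma>] by fastforce
qed

lemma stop_family_subset_grid:
  assumes "Qs \<in> dy_grid \<beta>"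
  shows "stop_family \<mu> \<beta> b A p Qs \<subseteq> dy_grid \<beta>"
proof -
  have "stop_gen \<mu> \<beta> b A p Qs j \<subseteq> dy_grid \<beta>" for j
    by (induction j) (use assms in \<open>auto simp: stop_children_def\<close>)
  then show ?thesis unfolding stop_family_def by blast
qed

lemma stop_parent:
  assumes Qs: "Qs \<in> dy_grid \<beta>" and Q: "Q \<in> dy_grid \<beta>" "Q \<subseteq> Qs"
  shows stop_parent_in_family: "stop_parent \<mu> \<beta> b A p Qs Q \<in> stop_family \<mu> \<beta> b A p Qs"
    and subset_stop_parent: "Q \<subseteq> stop_parent \<mu> \<beta> b A p Qs Q"
    and stop_parent_least:
      "\<And>F. F \<in> stop_family \<mu> \<beta> b A p Qs \<Longrightarrow> Q \<subseteq> F \<Longrightarrow> stop_parent \<mu> \<beta> b A p Qs Q \<subseteq> F"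
proof -
  let ?fam = "stop_family \<mu> \<beta> b A p Qs"
  let ?cover = "\<lambda>F. F \<in> ?fam \<and> Q \<subseteq> F"
  have Qs_in: "Qs \<in> ?fam"
    unfolding stop_family_def by (auto intro!: exI[of _ 0])
  have grid: "F \<in> dy_grid \<beta>" if "?cover F" for F
    using that stop_family_subset_grid[OF Qs] by blast
  have nested: "F \<subseteq> F'" if "?cover F" "?cover F'" "dy_level \<beta> F \<le> dy_level \<beta> F'" for F F'
    using that grid dy_grid_nonempty[OF Q(1)] by (intro dy_grid_nested) auto
  have level_ge: "dy_level \<beta> Q \<le> dy_level \<beta> F" if "?cover F" for F
  proof (cases "Q = F")
    case False
    with that have "Q \<subset> F" by blast
    then show ?thesis using dy_grid_psubset_level_less[OF Q(1) grid[OF that]] by simp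
  qed simp
  obtain F0 where F0: "?cover F0"
    and least: "\<And>F. ?cover F \<Longrightarrow> nat (dy_level \<beta> F0 - dy_level \<beta> Q) \<le> nat (dy_level \<beta> F - dy_level \<beta> Q)"
    using ex_has_least_nat[of ?cover Qs "\<lambda>F. nat (dy_level \<beta> F - dy_level \<beta> Q)"] Qs_in Q(2) by blast
  have F0_least: "F0 \<subseteq> F" if "?cover F" for F
    using nested[OF F0 that] least[OF that] level_ge[OF that] level_ge[OF F0] by linarith
  have "stop_parent \<mu> \<beta> b A p Qs Q = F0"
    unfolding stop_parent_def using F0 F0_least by (intro the_equality) blast+
  with F0 F0_least show "stop_parent \<mu> \<beta> b A p Qs Q \<in> ?fam" "Q \<subseteq> stop_parent \<mu> \<beta> b A p Qs Q"
      "\<And>F. F \<in> ?fam \<Longrightarrow> Q \<subseteq> F \<Longrightarrow> stop_parent \<mu> \<beta> b A p Qs Q \<subseteq> F"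
    by auto
qed

text \<open>Otherwise a maximal stopping cube of \<open>F\<close> containing \<open>P\<close> would be a smaller stopping cube
  containing \<open>Q\<close>.\<close>
lemma not_stop_cond_below_stop_parent:
  assumes Qs: "Qs \<in> dy_grid \<beta>" and Q: "Q \<in> dy_grid \<beta>" "Q \<subseteq> Qs"
    and P: "P \<in> dy_grid \<beta>" "Q \<subseteq> P" "P \<subset> stop_parent \<mu> \<beta> b A p Qs Q"
  shows "\<not> stop_cond \<mu> b A p (stop_parent \<mu> \<beta> b A p Qs Q) P"
proof
  define F where "F = stop_parent \<mu> \<beta> b A p Qs Q"
  assume "stop_cond \<mu> b A p (stop_parent \<mu> \<beta> b A p Qs Q) P"
  then have stop: "stop_cond \<mu> b A p F P" unfolding F_def .
  have F: "F \<in> stop_family \<mu> \<beta> b A p Qs" "F \<in> dy_grid \<beta>"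
    unfolding F_def using stop_parent_in_family[OF Qs Q, of \<mu> b A p]
      stop_family_subset_grid[OF Qs, of \<mu> b A p] by auto
  let ?S = "\<lambda>P'. P' \<in> dy_grid \<beta> \<and> P \<subseteq> P' \<and> P' \<subset> F \<and> stop_cond \<mu> b A p F P'"
  obtain P0 where P0: "?S P0"
    and max: "\<And>P'. ?S P' \<Longrightarrow> nat (dy_level \<beta> F - dy_level \<beta> P0) \<le> nat (dy_level \<beta> F - dy_level \<beta> P')"
    using ex_has_least_nat[of ?S P "\<lambda>P'. nat (dy_level \<beta> F - dy_level \<beta> P')"] P stop
    unfolding F_def by blast
  have "P0 \<in> stop_children \<mu> \<beta> b A p F"
    unfolding stop_children_def
  proof (intro CollectI conjI ballI impI notI)
    fix Q' assume Q': "Q' \<in> dy_grid \<beta>" "P0 \<subset> Q' \<and> Q' \<subset> F" "stop_cond \<mu> b A p F Q'"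
    then have "?S Q'" using P0 by blast
    moreover have "dy_level \<beta> P0 < dy_level \<beta> Q'" "dy_level \<beta> Q' < dy_level \<beta> F"
      using P0 Q' F(2) dy_grid_psubset_level_less by blast+
    ultimately show False using max by fastforce
  qed (use P0 in auto)
  moreover obtain j where "F \<in> stop_gen \<mu> \<beta> b A p Qs j"
    using F(1) unfolding stop_family_def by blast
  ultimately have "P0 \<in> stop_family \<mu> \<beta> b A p Qs"
    unfolding stop_family_def by (auto intro!: exI[of _ "Suc j"])
  then have "F \<subseteq> P0"
    using stop_parent_least[OF Qs Q] P0 P(2) unfolding F_def by blast
  with P0 show False by blast
qed

end

section \<open>Measures of power growth\<close>

lemma ennreal_term_le_suminf: "f k \<le> (\<Sum>n. f n :: ennreal)"
  using sum_le_suminf[of f "{k}"] by auto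

lemma nn_integral_indicator_le_emeasure_plus_powr:
  fixes f :: "'a \<Rightarrow> real"
  assumes f: "f \<in> borel_measurable M" "\<And>z. 0 \<le> f z" and P: "P \<in> sets M" and p: "1 \<le> p"
  shows "(\<integral>\<^sup>+ z. ennreal (f z) * indicator P z \<partial>M)
    \<le> emeasure M P + (\<integral>\<^sup>+ z. ennreal (f z powr p) * indicator P z \<partial>M)"
proof -
  have "f z \<le> 1 + f z powr p" for z
  proof (cases "f z \<le> 1")
    case False
    then have "f z powr 1 \<le> f z powr p" using p by (intro powr_mono) auto
    then show ?thesis using False by simp
  qed (use powr_ge_zero[of "f z" p] in linarith)
  then have "ennreal (f z) \<le> 1 + ennreal (f z powr p)" for z
    using ennreal_leI[of "f z" "1 + f z powr p"] f(2)[of z] by simp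
  then have "ennreal (f z) * indicator P z \<le> indicator P z + ennreal (f z powr p) * indicator P z" for z
    by (cases "z \<in> P") auto
  then have "(\<integral>\<^sup>+ z. ennreal (f z) * indicator P z \<partial>M)
      \<le> (\<integral>\<^sup>+ z. indicator P z + ennreal (f z powr p) * indicator P z \<partial>M)"
    by (intro nn_integral_mono)
  also have "\<dots> = emeasure M P + (\<integral>\<^sup>+ z. ennreal (f z powr p) * indicator P z \<partial>M)"
    using f P by (subst nn_integral_add) auto
  finally show ?thesis .
qed

lemma nn_integral_indicator_le_of_avg_le:
  fixes f :: "'a \<Rightarrow> real"
  assumes f: "f \<in> borel_measurable M" "\<And>z. 0 \<le> f z"
    and P: "P \<in> sets M" "emeasure M P < \<infinity>"
    and finite: "(\<integral>\<^sup>+ z. ennreal (f z) * indicator P z \<partial>M) < \<infinity>"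
    and avg: "avg M P f \<le> B" and B: "0 \<le> B"
  shows "(\<integral>\<^sup>+ z. ennreal (f z) * indicator P z \<partial>M) \<le> ennreal B * emeasure M P"
proof (cases "measure M P = 0")
  case True
  then have "emeasure M P = 0"
    using P(2) emeasure_eq_ennreal_measure[of M P] by simp
  then have "P \<in> null_sets M" using P(1) by auto
  then show ?thesis by (simp add: nn_integral_null_set)
next
  case False
  let ?I = "\<integral>\<^sup>+ z. ennreal (f z) * indicator P z \<partial>M"
  have "(LINT z:P|M. f z) = (\<integral>z. indicator P z * f z \<partial>M)"
    unfolding set_lebesgue_integral_def by simp
  also have "\<dots> = enn2real (\<integral>\<^sup>+ z. ennreal (indicator P z * f z) \<partial>M)"
    using f P by (intro integral_eq_nn_integral) auto
  also have "(\<integral>\<^sup>+ z. ennreal (indicator P z * f z) \<partial>M) = ?I"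
    by (intro nn_integral_cong) (auto simp: indicator_def)
  finally have "inverse (measure M P) * enn2real ?I \<le> B"
    using avg unfolding avg_def by simp
  then have "enn2real ?I \<le> B * measure M P"
    using False measure_nonneg[of M P] by (simp add: field_simps)
  then have "ennreal (enn2real ?I) \<le> ennreal (B * measure M P)"
    by (rule ennreal_leI)
  then show ?thesis
    using finite P(2) B emeasure_eq_ennreal_measure[of M P] by (simp add: ennreal_mult less_top)
qed

lemma decay_le_suminf_linf_balls:
  assumes t: "0 < t" and q: "0 < q"
  shows "ennreal ((t / (t + linf_dist c y)) powr q)
     \<le> (\<Sum>k. ennreal (2 powr (- real k * q)) * indicator (linf_ball c (2 powr (real k + 1) * t)) y)"
proof -
  let ?d = "linf_dist c y"
  have "eventually (\<lambda>n. ?d / t \<le> 2 powr (real n * 1)) sequentially"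
    by (rule eventually_le_two_powr) simp
  then obtain n :: nat where "?d / t \<le> 2 powr real n"
    using eventually_happens'[OF trivial_limit_sequentially] by auto
  then have "?d \<le> 2 powr real n * t" using t by (simp add: divide_le_eq)
  also have "\<dots> < 2 powr (real n + 1) * t" using t by (simp add: powr_add)
  finally have ex: "\<exists>n::nat. ?d < 2 powr (real n + 1) * t" by blast
  define k where "k = (LEAST n::nat. ?d < 2 powr (real n + 1) * t)"
  have in_ball: "?d < 2 powr (real k + 1) * t"
    unfolding k_def by (rule LeastI_ex[OF ex])
  have "t / (t + ?d) \<le> 2 powr (- real k)"
  proof (cases k)
    case 0
    then show ?thesis using t linf_dist_nonneg[of c y] by simp
  next
    case (Suc k')
    then have "2 powr real k * t \<le> ?d"
      using not_less_Least[of k' "\<lambda>n. ?d < 2 powr (real n + 1) * t"] unfolding k_def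
      by (simp add: add.commute)
    then have "t / (t + ?d) \<le> t / (2 powr real k * t)"
      using t linf_dist_nonneg[of c y] by (intro divide_left_mono) auto
    also have "\<dots> = 2 powr (- real k)"
      using t by (simp add: powr_minus inverse_eq_divide)
    finally show ?thesis .
  qed
  then have "(t / (t + ?d)) powr q \<le> 2 powr (- real k * q)"
    using t q linf_dist_nonneg[of c y] powr_mono2[of q "t / (t + ?d)" "2 powr (- real k)"]
    by (simp add: powr_powr)
  then have "ennreal ((t / (t + ?d)) powr q)
      \<le> ennreal (2 powr (- real k * q)) * indicator (linf_ball c (2 powr (real k + 1) * t)) y"
    using in_ball by (simp add: linf_ball_def ennreal_leI)
  also have "\<dots> \<le> (\<Sum>k. ennreal (2 powr (- real k * q)) * indicator (linf_ball c (2 powr (real k + 1) * t)) y)"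
    by (rule ennreal_term_le_suminf)
  finally show ?thesis .
qed

lemma suminf_ennreal_geometric:
  assumes "0 \<le> a" "0 \<le> q" "q < 1"
  shows "(\<Sum>k. ennreal (a * q ^ k)) = ennreal (a / (1 - q))"
proof -
  have "(\<Sum>k. ennreal (a * q ^ k)) = ennreal (\<Sum>k. a * q ^ k)"
    using assms by (intro suminf_ennreal2 summable_mult summable_geometric) auto
  also have "(\<Sum>k. a * q ^ k) = a / (1 - q)"
    using assms suminf_geometric[of q] by (simp add: suminf_mult)
  finally show ?thesis .
qed

lemma ennreal_add_square_le: "((a::ennreal) + b)\<^sup>2 \<le> 2 * a\<^sup>2 + 2 * b\<^sup>2"
proof (cases a; cases b)
  fix u v :: real assume uv: "a = ennreal u" "0 \<le> u" "b = ennreal v" "0 \<le> v"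
  have "(u + v)\<^sup>2 \<le> 2 * u\<^sup>2 + 2 * v\<^sup>2"
    using sum_squares_ge_zero[of "u - v" 0] by (simp add: power2_eq_square algebra_simps)
  moreover have "(a + b)\<^sup>2 = ennreal ((u + v)\<^sup>2)"
    using uv by (simp add: ennreal_power flip: ennreal_plus)
  moreover have "2 * a\<^sup>2 + 2 * b\<^sup>2 = ennreal (2 * u\<^sup>2 + 2 * v\<^sup>2)"
    using uv by (simp add: ennreal_mult ennreal_power)
  ultimately show ?thesis by (metis ennreal_leI)
qed (auto simp: top_add add_top power2_eq_square)

lemma two_powr_nat_power: "(2 powr x) ^ k = 2 powr (real k * x)"
  by (simp add: powr_realpow[symmetric] powr_powr mult.commute)

locale power_growth_measure =
  fixes \<mu> :: "(real^'n) measure" and C m :: real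
  assumes sets_eq [measurable_cong]: "sets \<mu> = sets borel"
    and exponent_pos: "0 < m" and growth_const_nonneg: "0 \<le> C"
    and growth: "\<And>x \<rho>. 0 < \<rho> \<Longrightarrow> emeasure \<mu> (linf_ball x \<rho>) \<le> ennreal (C * \<rho> powr m)"
begin

lemma space_eq [simp]: "space \<mu> = UNIV"
  using sets_eq_imp_space_eq[OF sets_eq] by simp

lemma measurable_eq [simp]: "measurable \<mu> N = measurable borel N"
  by (rule measurable_cong_sets[OF sets_eq refl])

lemma sigma_finite: "sigma_finite_measure \<mu>"
proof
  let ?A = "range (\<lambda>n::nat. linf_ball 0 (real n + 1))"
  have "\<exists>n::nat. linf_dist 0 y < real n + 1" for y :: "real^'n"
  proof -
    obtain n :: nat where "linf_dist 0 y < real n" using reals_Archimedean2 by blast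
    then show ?thesis by (intro exI[of _ n]) simp
  qed
  moreover have "emeasure \<mu> (linf_ball 0 (real n + 1)) \<noteq> \<infinity>" for n :: nat
    using growth[of "real n + 1" 0] ennreal_neq_top neq_top_trans by force
  ultimately show "\<exists>A. countable A \<and> A \<subseteq> sets \<mu> \<and> \<Union> A = space \<mu> \<and> (\<forall>a\<in>A. emeasure \<mu> a \<noteq> \<infinity>)"
    by (intro exI[of _ ?A]) (auto simp: sets_eq linf_ball_def)
qed

definition decay_const :: "real \<Rightarrow> real" where
  "decay_const q = C * 2 powr m / (1 - 2 powr (m - q))"

lemma decay_const_nonneg: "m < q \<Longrightarrow> 0 \<le> decay_const q"
  unfolding decay_const_def using growth_const_nonneg powr_less_one[of 2 "m - q"] by simp

lemma nn_integral_decay_le: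
  assumes t: "0 < t" and q: "m < q"
  shows "(\<integral>\<^sup>+ y. ennreal ((t / (t + linf_dist c y)) powr q) \<partial>\<mu>) \<le> ennreal (decay_const q * t powr m)"
proof -
  let ?r = "2 powr (m - q)"
  have r: "0 < ?r" "?r < 1" using q powr_less_one[of 2 "m - q"] by auto
  have "(\<integral>\<^sup>+ y. ennreal ((t / (t + linf_dist c y)) powr q) \<partial>\<mu>)
      \<le> (\<integral>\<^sup>+ y. (\<Sum>k. ennreal (2 powr (- real k * q)) * indicator (linf_ball c (2 powr (real k + 1) * t)) y) \<partial>\<mu>)"
    using q exponent_pos by (intro nn_integral_mono decay_le_suminf_linf_balls t) simp
  also have "\<dots> = (\<Sum>k. ennreal (2 powr (- real k * q)) * emeasure \<mu> (linf_ball c (2 powr (real k + 1) * t)))"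
    by (simp add: nn_integral_suminf nn_integral_cmult_indicator sets_eq)
  also have "\<dots> \<le> (\<Sum>k. ennreal (C * 2 powr m * t powr m * ?r ^ k))"
  proof (intro suminf_le summableI)
    fix k :: nat
    have "ennreal (2 powr (- real k * q)) * emeasure \<mu> (linf_ball c (2 powr (real k + 1) * t))
        \<le> ennreal (2 powr (- real k * q)) * ennreal (C * (2 powr (real k + 1) * t) powr m)"
      using t by (intro mult_left_mono growth) simp_all
    also have "\<dots> = ennreal (2 powr (- real k * q) * (C * (2 powr (real k + 1) * t) powr m))"
      by (simp add: ennreal_mult')
    also have "2 powr (- real k * q) * (C * (2 powr (real k + 1) * t) powr m) = C * 2 powr m * t powr m * ?r ^ k"
    proof -
      have "(2 powr (real k + 1) * t) powr m = 2 powr ((real k + 1) * m) * t powr m"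
        using t by (simp add: powr_mult powr_powr)
      then show ?thesis
        by (simp add: two_powr_nat_power algebra_simps flip: powr_add)
    qed
    finally show "ennreal (2 powr (- real k * q)) * emeasure \<mu> (linf_ball c (2 powr (real k + 1) * t))
        \<le> ennreal (C * 2 powr m * t powr m * ?r ^ k)" .
  qed
  also have "\<dots> = ennreal (decay_const q * t powr m)"
    using r growth_const_nonneg unfolding decay_const_def by (subst suminf_ennreal_geometric) auto
  finally show ?thesis .
qed

end

lemma power_growth_measure_max_const:
  fixes \<mu> :: "(real^'n) measure"
  assumes "sets \<mu> = sets borel" "0 < m"
    and growth: "\<And>x \<rho>. 0 < \<rho> \<Longrightarrow> emeasure \<mu> (linf_ball x \<rho>) \<le> ennreal (C * \<rho> powr m)"
  shows "power_growth_measure \<mu> (max C 0) m"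
proof
  fix x :: "real^'n" and \<rho> :: real
  assume "0 < \<rho>"
  moreover have "ennreal (C * \<rho> powr m) \<le> ennreal (max C 0 * \<rho> powr m)"
    by (intro ennreal_leI mult_right_mono) auto
  ultimately show "emeasure \<mu> (linf_ball x \<rho>) \<le> ennreal (max C 0 * \<rho> powr m)"
    using growth order_trans by blast
qed (use assms in auto)

definition stopping_Lp_bound :: "real \<Rightarrow> real \<Rightarrow> real" where
  "stopping_Lp_bound A p = max A (2 powr (p/(p-1) + 1) * A powr (p/(p-1)))"

lemma stopping_Lp_bound_nonneg: "0 \<le> stopping_Lp_bound A p"
  unfolding stopping_Lp_bound_def by (intro max.coboundedI2 mult_nonneg_nonneg) auto

locale dyadic_power_growth = dyadic_grid \<beta> + power_growth_measure \<mu> C m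
  for \<beta> :: "int \<Rightarrow> real^'n" and \<mu> :: "(real^'n) measure" and C m :: real
begin

lemma emeasure_dy_grid_le:
  assumes "Q \<in> dy_grid \<beta>"
  shows "emeasure \<mu> Q \<le> ennreal (C * side \<beta> Q powr m)"
proof -
  obtain k v where "Q = dy_cube \<beta> k v" using assms unfolding dy_grid_iff by blast
  then have "emeasure \<mu> Q \<le> emeasure \<mu> (linf_ball (dy_corner k v) (side \<beta> Q))"
    using dy_cube_subset_linf_ball by (intro emeasure_mono) (auto simp: sets_eq)
  also have "\<dots> \<le> ennreal (C * side \<beta> Q powr m)"
    by (rule growth[OF side_pos])
  finally show ?thesis .
qed

text \<open>Below its stopping parent \<open>F\<close> a cube is not a stopping cube of \<open>F\<close>, so \<open>|b_F|^p\<close> has bounded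
  average on it; above \<open>F\<close> the \<open>L^p\<close> bound of \<open>b_F\<close> applies directly.\<close>
lemma nn_integral_powr_stop_parent_le:
  assumes Qs: "Qs \<in> dy_grid \<beta>" and Q: "Q \<in> dy_grid \<beta>" "Q \<subseteq> Qs"
    and P: "P \<in> dy_grid \<beta>" "Q \<subseteq> P"
    and b_meas: "\<And>Q. Q \<in> dy_grid \<beta> \<Longrightarrow> b Q \<in> borel_measurable \<mu>"
    and b_Lp: "\<And>Q. Q \<in> dy_grid \<beta> \<Longrightarrow> (\<integral>\<^sup>+ z. ennreal (cmod (b Q z) powr p) \<partial>\<mu>) \<le> ennreal (A * measure \<mu> Q)"
  shows "(\<integral>\<^sup>+ z. ennreal (cmod (b (stop_parent \<mu> \<beta> b A p Qs Q) z) powr p) * indicator P z \<partial>\<mu>)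
    \<le> ennreal (stopping_Lp_bound A p) * emeasure \<mu> P"
proof -
  define F where "F = stop_parent \<mu> \<beta> b A p Qs Q"
  let ?K = "stopping_Lp_bound A p" and ?f = "\<lambda>z. cmod (b F z) powr p"
  have F: "F \<in> dy_grid \<beta>" "Q \<subseteq> F"
    unfolding F_def using stop_parent_in_family[OF Qs Q, of \<mu> b A p] subset_stop_parent[OF Qs Q]
      stop_family_subset_grid[OF Qs, of \<mu> b A p] by auto
  have fin: "emeasure \<mu> S < \<infinity>" if "S \<in> dy_grid \<beta>" for S
    using emeasure_dy_grid_le[OF that] by (simp add: le_less_trans)
  have P_sets: "P \<in> sets \<mu>" using dy_grid_borel[OF P(1)] by simp
  have total: "(\<integral>\<^sup>+ z. ennreal (?f z) * indicator P z \<partial>\<mu>) \<le> ennreal (A * measure \<mu> F)"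
    using b_Lp[OF F(1)] by (elim order_trans[rotated]) (auto intro!: nn_integral_mono simp: indicator_def)
  have "P \<subseteq> F \<or> F \<subseteq> P"
    using dy_grid_comparable[OF P(1) F(1)] F(2) P(2) dy_grid_nonempty[OF Q(1)] by blast
  then consider "F \<subseteq> P" | "P \<subset> F" by blast
  then show ?thesis
  proof cases
    case 1
    have "ennreal (A * measure \<mu> F) \<le> ennreal (?K * measure \<mu> F)"
      by (intro ennreal_leI mult_right_mono) (auto simp: stopping_Lp_bound_def)
    also have "\<dots> = ennreal ?K * emeasure \<mu> F"
      using fin[OF F(1)] stopping_Lp_bound_nonneg
      by (simp add: emeasure_eq_ennreal_measure ennreal_mult less_top)
    also have "\<dots> \<le> ennreal ?K * emeasure \<mu> P"
      using 1 P_sets by (intro mult_left_mono emeasure_mono) auto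
    finally show ?thesis using total unfolding F_def by simp
  next
    case 2
    then have "\<not> stop_cond \<mu> b A p F P"
      unfolding F_def by (intro not_stop_cond_below_stop_parent[OF Qs Q P]) (simp add: F_def)
    then have "avg \<mu> P ?f \<le> ?K"
      unfolding stop_cond_def stopping_Lp_bound_def by auto
    with total show ?thesis unfolding F_def[symmetric]
      using b_meas[OF F(1)] P_sets fin[OF P(1)] stopping_Lp_bound_nonneg
      by (intro nn_integral_indicator_le_of_avg_le) (auto simp: le_less_trans)
  qed
qed

lemma nn_integral_stop_parent_le:
  assumes Qs: "Qs \<in> dy_grid \<beta>" and Q: "Q \<in> dy_grid \<beta>" "Q \<subseteq> Qs"
    and P: "P \<in> dy_grid \<beta>" "Q \<subseteq> P" and p: "1 \<le> p"
    and b_meas: "\<And>Q. Q \<in> dy_grid \<beta> \<Longrightarrow> b Q \<in> borel_measurable \<mu>"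
    and b_Lp: "\<And>Q. Q \<in> dy_grid \<beta> \<Longrightarrow> (\<integral>\<^sup>+ z. ennreal (cmod (b Q z) powr p) \<partial>\<mu>) \<le> ennreal (A * measure \<mu> Q)"
  shows "(\<integral>\<^sup>+ z. ennreal (cmod (b (stop_parent \<mu> \<beta> b A p Qs Q) z)) * indicator P z \<partial>\<mu>)
    \<le> ennreal ((1 + stopping_Lp_bound A p) * C * side \<beta> P powr m)"
proof -
  let ?F = "stop_parent \<mu> \<beta> b A p Qs Q" and ?K = "stopping_Lp_bound A p"
  have "?F \<in> dy_grid \<beta>"
    using stop_parent_in_family[OF Qs Q, of \<mu> b A p] stop_family_subset_grid[OF Qs, of \<mu> b A p] by auto
  then have "(\<integral>\<^sup>+ z. ennreal (cmod (b ?F z)) * indicator P z \<partial>\<mu>)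
      \<le> emeasure \<mu> P + (\<integral>\<^sup>+ z. ennreal (cmod (b ?F z) powr p) * indicator P z \<partial>\<mu>)"
    using b_meas dy_grid_borel[OF P(1)] p by (intro nn_integral_indicator_le_emeasure_plus_powr) auto
  also have "\<dots> \<le> emeasure \<mu> P + ennreal ?K * emeasure \<mu> P"
    by (intro add_left_mono nn_integral_powr_stop_parent_le assms)
  also have "\<dots> = ennreal (1 + ?K) * emeasure \<mu> P"
    using stopping_Lp_bound_nonneg by (simp add: distrib_right ennreal_plus)
  also have "\<dots> \<le> ennreal (1 + ?K) * ennreal (C * side \<beta> P powr m)"
    by (intro mult_left_mono emeasure_dy_grid_le P) simp
  finally show ?thesis
    using stopping_Lp_bound_nonneg by (simp add: ennreal_mult' mult.assoc)
qed

end

section \<open>The off-diagonal estimate\<close>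

text \<open>The constants are defined from the parameters of this locale alone, so they do not depend on
  the cube, the scale or the point at which the estimate is applied.\<close>
locale off_diagonal_constants = power_growth_measure \<mu> C m
  for \<mu> :: "(real^'n) measure" and C m :: real +
  fixes Cs K \<alpha> \<gamma> lam :: real
  assumes kernel_const_nonneg: "0 \<le> Cs" and mass_const_nonneg: "0 \<le> K"
    and alpha_pos: "0 < \<alpha>" and alpha_le: "\<alpha> \<le> m * (lam - 2) / 2"
    and gamma_le: "\<gamma> \<le> \<alpha> / (2 * (m + \<alpha>))"
begin

lemma gamma_times_le: "\<gamma> * (m + \<alpha>) \<le> \<alpha> / 2"
  using gamma_le exponent_pos alpha_pos by (simp add: field_simps)

lemma gamma_less_one: "\<gamma> < 1"
proof -
  have "\<gamma> * (m + \<alpha>) < 1 * (m + \<alpha>)"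
    unfolding mult_1_left using gamma_times_le exponent_pos alpha_pos by linarith
  then show ?thesis
    using exponent_pos alpha_pos mult_less_cancel_right_pos[of "m + \<alpha>" \<gamma> 1] by linarith
qed

lemma m_less_m_lam: "m < m * lam"
proof -
  have "0 < m * (lam - 2)" using alpha_pos alpha_le by linarith
  then have "1 < lam" using exponent_pos by (simp add: zero_less_mult_iff)
  then have "m * 1 < m * lam" using exponent_pos by (intro mult_strict_left_mono)
  then show ?thesis by simp
qed

definition far_exponent :: real where
  "far_exponent = (1 - \<gamma>) * (m + \<alpha>) - m"

definition near_exponent :: real where
  "near_exponent = m * ((1 - \<gamma>) * lam - 2)"

lemma far_exponent_ge: "\<alpha> / 2 \<le> far_exponent"
  using gamma_times_le unfolding far_exponent_def by (simp add: algebra_simps)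

text \<open>This is where \<open>\<alpha> \<le> m (\<lambda> - 2) / 2\<close> is needed.\<close>
lemma near_exponent_ge: "\<alpha> \<le> near_exponent"
proof -
  have "m * ((1 - \<gamma>) * (2 + 2 * \<alpha> / m)) \<le> m * ((1 - \<gamma>) * lam)"
    using alpha_le exponent_pos gamma_less_one by (intro mult_left_mono) (auto simp: field_simps)
  moreover have "m * ((1 - \<gamma>) * (2 + 2 * \<alpha> / m)) = 2 * m + 2 * \<alpha> - 2 * (\<gamma> * (m + \<alpha>))"
    using exponent_pos by (simp add: field_simps)
  ultimately show ?thesis
    using gamma_times_le unfolding near_exponent_def by (simp add: algebra_simps)
qed

definition far_const :: real where
  "far_const = Cs * 2 powr (m + \<alpha>) * K * 2 powr ((1 - \<gamma>) * (m + \<alpha>)) / (1 - 2 powr (- far_exponent))"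

definition shell_const :: real where
  "shell_const = Cs\<^sup>2 * decay_const (m + \<alpha>) * K\<^sup>2 * 2 powr (m * lam + 4 * m + near_exponent)"

definition off_diagonal_const :: real where
  "off_diagonal_const =
     2 * far_const\<^sup>2 * decay_const (m * lam) + 2 * shell_const / (1 - 2 powr (- near_exponent))"

lemma two_powr_neg_exponents_less_one:
  "2 powr (- far_exponent) < 1" "2 powr (- near_exponent) < 1"
  using far_exponent_ge near_exponent_ge alpha_pos by (auto intro: powr_less_one)

lemma far_const_nonneg: "0 \<le> far_const"
  unfolding far_const_def using two_powr_neg_exponents_less_one kernel_const_nonneg mass_const_nonneg
  by simp

lemma shell_const_nonneg: "0 \<le> shell_const"
  unfolding shell_const_def using decay_const_nonneg[of "m + \<alpha>"] alpha_pos by simp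

lemma off_diagonal_const_nonneg: "0 \<le> off_diagonal_const"
  unfolding off_diagonal_const_def
  using decay_const_nonneg[OF m_less_m_lam] shell_const_nonneg two_powr_neg_exponents_less_one by simp

end

text \<open>\<open>J j\<close> stands for the ancestor \<open>R^(j)\<close> of a good cube \<open>R\<close> with \<open>L = \<ell>(R)\<close> and \<open>x \<in> R\<close>,
  \<open>b\<close> for the testing function of the stopping parent of \<open>R^(i)\<close>, and \<open>s\<close> for \<open>s_t\<close>.\<close>
locale off_diagonal_estimate = off_diagonal_constants \<mu> C m Cs K \<alpha> \<gamma> lam
  for \<mu> :: "(real^'n) measure" and C m Cs K \<alpha> \<gamma> lam :: real +
  fixes x :: "real^'n" and L t :: real and i :: nat
    and J :: "nat \<Rightarrow> (real^'n) set" and b :: "real^'n \<Rightarrow> complex"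
    and s :: "real^'n \<Rightarrow> real^'n \<Rightarrow> complex"
  assumes J_borel [measurable]: "\<And>j. J j \<in> sets borel"
    and J_mono: "\<And>j j'. j \<le> j' \<Longrightarrow> J j \<subseteq> J j'"
    and J_cover: "\<And>z. \<exists>j. z \<in> J j"
    and J_far: "\<And>j z. i - 1 \<le> j \<Longrightarrow> z \<notin> J j \<Longrightarrow> L * 2 powr (real j * (1 - \<gamma>)) < linf_dist x z"
    and J_mass: "\<And>j. i \<le> j \<Longrightarrow>
      (\<integral>\<^sup>+ z. ennreal (cmod (b z)) * indicator (J j) z \<partial>\<mu>) \<le> ennreal (K * (2 powr real j * L) powr m)"
    and b_borel [measurable]: "b \<in> borel_measurable borel"
    and s_borel [measurable]: "\<And>y. s y \<in> borel_measurable borel"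
    and s_le: "\<And>y z. cmod (s y z) \<le> Cs * t powr \<alpha> / (t + linf_dist y z) powr (m + \<alpha>)"
    and L_pos: "0 < L" and t_gt: "L / 2 < t" and t_le: "t \<le> L" and i_pos: "1 \<le> i"
begin

definition kernel_bound :: "real^'n \<Rightarrow> real^'n \<Rightarrow> real" where
  "kernel_bound y z = Cs * t powr \<alpha> / (t + linf_dist y z) powr (m + \<alpha>)"

definition tail :: "real^'n \<Rightarrow> complex" where
  "tail z = (if z \<in> J (i - 1) then 0 else b z)"

definition weight :: "real^'n \<Rightarrow> real" where
  "weight y = (t / (t + linf_dist x y)) powr (m * lam) / t powr m"

definition potential :: "nat \<Rightarrow> real^'n \<Rightarrow> ennreal" where
  "potential j y = (\<integral>\<^sup>+ z. ennreal (kernel_bound y z) * ennreal (cmod (b z)) * indicator (J j) z \<partial>\<mu>)"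

lemma t_pos: "0 < t"
  using t_gt L_pos by simp

lemma kernel_bound_nonneg: "0 \<le> kernel_bound y z"
  unfolding kernel_bound_def using kernel_const_nonneg by simp

lemma kernel_bound_le: "kernel_bound y z \<le> Cs * t powr (- m)"
proof -
  have "t powr (m + \<alpha>) \<le> (t + linf_dist y z) powr (m + \<alpha>)"
    using t_pos linf_dist_nonneg[of y z] alpha_pos exponent_pos by (intro powr_mono2) auto
  then have "kernel_bound y z \<le> Cs * t powr \<alpha> / t powr (m + \<alpha>)"
    unfolding kernel_bound_def using t_pos kernel_const_nonneg linf_dist_nonneg[of y z]
    by (intro divide_left_mono) auto
  also have "\<dots> = Cs * t powr (- m)"
    using t_pos by (simp add: powr_add powr_minus field_simps)
  finally show ?thesis .
qed

lemma kernel_bound_borel [measurable (raw)]: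
  assumes [measurable]: "f \<in> borel_measurable M" "g \<in> borel_measurable M"
  shows "(\<lambda>w. kernel_bound (f w) (g w)) \<in> borel_measurable M"
  unfolding kernel_bound_def by measurable

lemma potential_borel [measurable]: "potential j \<in> borel_measurable \<mu>"
proof -
  interpret sigma_finite_measure \<mu> by (rule sigma_finite)
  show ?thesis
    unfolding potential_def by measurable
qed

lemma nn_integral_kernel_bound_le: "(\<integral>\<^sup>+ y. ennreal (kernel_bound y z) \<partial>\<mu>) \<le> ennreal (Cs * decay_const (m + \<alpha>))"
proof -
  have eq: "kernel_bound y z = Cs * t powr (- m) * (t / (t + linf_dist z y)) powr (m + \<alpha>)" for y
    using t_pos linf_dist_nonneg[of y z]
    by (simp add: kernel_bound_def powr_divide linf_dist_commute powr_add powr_minus field_simps)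
  have "(\<integral>\<^sup>+ y. ennreal (kernel_bound y z) \<partial>\<mu>)
      = ennreal (Cs * t powr (- m)) * (\<integral>\<^sup>+ y. ennreal ((t / (t + linf_dist z y)) powr (m + \<alpha>)) \<partial>\<mu>)"
    unfolding eq using kernel_const_nonneg by (simp add: ennreal_mult nn_integral_cmult)
  also have "\<dots> \<le> ennreal (Cs * t powr (- m)) * ennreal (decay_const (m + \<alpha>) * t powr m)"
    using t_pos alpha_pos by (intro mult_left_mono nn_integral_decay_le) auto
  also have "\<dots> = ennreal (Cs * decay_const (m + \<alpha>))"
    using kernel_const_nonneg t_pos by (simp add: ennreal_mult'[symmetric] powr_minus field_simps)
  finally show ?thesis .
qed

lemma nn_integral_potential_le:
  "(\<integral>\<^sup>+ y. potential j y \<partial>\<mu>)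
    \<le> ennreal (Cs * decay_const (m + \<alpha>)) * (\<integral>\<^sup>+ z. ennreal (cmod (b z)) * indicator (J j) z \<partial>\<mu>)"
proof -
  interpret pair_sigma_finite \<mu> \<mu>
    using sigma_finite by (simp add: pair_sigma_finite_def)
  have "(\<integral>\<^sup>+ y. potential j y \<partial>\<mu>)
      = (\<integral>\<^sup>+ z. (\<integral>\<^sup>+ y. ennreal (kernel_bound y z) \<partial>\<mu>) * (ennreal (cmod (b z)) * indicator (J j) z) \<partial>\<mu>)"
    unfolding potential_def
    by (subst Fubini') (auto simp: split_beta' mult.assoc intro!: nn_integral_cong nn_integral_multc)
  also have "\<dots> \<le> (\<integral>\<^sup>+ z. ennreal (Cs * decay_const (m + \<alpha>)) * (ennreal (cmod (b z)) * indicator (J j) z) \<partial>\<mu>)"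
    by (intro nn_integral_mono mult_right_mono nn_integral_kernel_bound_le) simp
  also have "\<dots> = ennreal (Cs * decay_const (m + \<alpha>)) * (\<integral>\<^sup>+ z. ennreal (cmod (b z)) * indicator (J j) z \<partial>\<mu>)"
    by (simp add: nn_integral_cmult)
  finally show ?thesis .
qed

lemma norm_integral_tail_le:
  "ennreal (cmod (LINT z|\<mu>. s y z * tail z)) \<le> (\<integral>\<^sup>+ z. ennreal (kernel_bound y z) * ennreal (cmod (tail z)) \<partial>\<mu>)"
proof (cases "integrable \<mu> (\<lambda>z. s y z * tail z)")
  case True
  have "ennreal (cmod (LINT z|\<mu>. s y z * tail z)) \<le> (\<integral>\<^sup>+ z. ennreal (cmod (s y z * tail z)) \<partial>\<mu>)"
    using integral_norm_bound_ennreal[OF True] by simp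
  also have "\<dots> \<le> (\<integral>\<^sup>+ z. ennreal (kernel_bound y z) * ennreal (cmod (tail z)) \<partial>\<mu>)"
  proof (intro nn_integral_mono)
    fix z
    have "cmod (s y z * tail z) \<le> kernel_bound y z * cmod (tail z)"
      unfolding norm_mult kernel_bound_def by (intro mult_right_mono s_le) simp
    then show "ennreal (cmod (s y z * tail z)) \<le> ennreal (kernel_bound y z) * ennreal (cmod (tail z))"
      by (simp add: ennreal_mult'[symmetric] kernel_bound_nonneg ennreal_leI)
  qed
  finally show ?thesis .
qed (simp add: not_integrable_integral_eq)

definition far_part :: "real^'n \<Rightarrow> ennreal" where
  "far_part z = ennreal (Cs * 2 powr (m + \<alpha>) * (t powr \<alpha> / (t + linf_dist x z) powr (m + \<alpha>))) * ennreal (cmod (tail z))"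

definition near_part :: "real^'n \<Rightarrow> real^'n \<Rightarrow> ennreal" where
  "near_part y z = ennreal (kernel_bound y z) * ennreal (cmod (tail z)) * indicator {z. linf_dist x z < 2 * linf_dist x y} z"

text \<open>Where \<open>|x - z| \<ge> 2 |x - y|\<close>, we have \<open>t + |x - z| \<le> 2 (t + |y - z|)\<close>, so the kernel is
  dominated by a function of \<open>z\<close> alone.\<close>
lemma kernel_tail_le_far_plus_near:
  "ennreal (kernel_bound y z) * ennreal (cmod (tail z)) \<le> far_part z + near_part y z"
proof (cases "linf_dist x z < 2 * linf_dist x y")
  case False
  have pos: "0 < (t + linf_dist y z) powr (m + \<alpha>)" "0 < (t + linf_dist x z) powr (m + \<alpha>)"
    using t_pos linf_dist_nonneg[of y z] linf_dist_nonneg[of x z] by simp_all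
  have "t + linf_dist x z \<le> 2 * (t + linf_dist y z)"
    unfolding distrib_left using False linf_dist_triangle[of x z y] t_pos by linarith
  then have "(t + linf_dist x z) powr (m + \<alpha>) \<le> 2 powr (m + \<alpha>) * (t + linf_dist y z) powr (m + \<alpha>)"
    using t_pos linf_dist_nonneg[of x z] alpha_pos exponent_pos
    by (auto simp flip: powr_mult intro!: powr_mono2)
  then have "kernel_bound y z \<le> Cs * 2 powr (m + \<alpha>) * (t powr \<alpha> / (t + linf_dist x z) powr (m + \<alpha>))"
    using pos kernel_const_nonneg unfolding kernel_bound_def
    by (simp add: field_simps mult_left_mono)
  then have "ennreal (kernel_bound y z) * ennreal (cmod (tail z)) \<le> far_part z"
    unfolding far_part_def by (intro mult_right_mono ennreal_leI) auto
  then show ?thesis by (simp add: add_increasing2)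
qed (simp add: near_part_def)

lemma nn_integral_kernel_tail_le:
  "(\<integral>\<^sup>+ z. ennreal (kernel_bound y z) * ennreal (cmod (tail z)) \<partial>\<mu>)
    \<le> (\<integral>\<^sup>+ z. far_part z \<partial>\<mu>) + (\<integral>\<^sup>+ z. near_part y z \<partial>\<mu>)"
proof -
  have "(\<integral>\<^sup>+ z. ennreal (kernel_bound y z) * ennreal (cmod (tail z)) \<partial>\<mu>) \<le> (\<integral>\<^sup>+ z. far_part z + near_part y z \<partial>\<mu>)"
    by (intro nn_integral_mono kernel_tail_le_far_plus_near)
  also have "\<dots> = (\<integral>\<^sup>+ z. far_part z \<partial>\<mu>) + (\<integral>\<^sup>+ z. near_part y z \<partial>\<mu>)"
    unfolding far_part_def near_part_def tail_def by (rule nn_integral_add) simp_all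
  finally show ?thesis .
qed

definition radius :: "nat \<Rightarrow> real" where
  "radius j = L * 2 powr (real j * (1 - \<gamma>))"

lemma radius_pos: "0 < radius j"
  unfolding radius_def using L_pos by simp

lemma radius_mono: "j \<le> j' \<Longrightarrow> radius j \<le> radius j'"
  unfolding radius_def using L_pos gamma_less_one by (intro mult_left_mono powr_mono mult_right_mono) auto

lemma decay_le_of_radius_less:
  assumes "radius n < linf_dist x z"
  shows "t powr \<alpha> / (t + linf_dist x z) powr (m + \<alpha>) \<le> L powr (- m) * 2 powr (- real n * (1 - \<gamma>) * (m + \<alpha>))"
proof -
  have "t powr \<alpha> / (t + linf_dist x z) powr (m + \<alpha>) \<le> L powr \<alpha> / radius n powr (m + \<alpha>)"
    using assms t_pos t_le alpha_pos exponent_pos radius_pos[of n]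
    by (intro frac_le powr_mono2) auto
  also have "radius n powr (m + \<alpha>) = L powr (m + \<alpha>) * 2 powr (real n * (1 - \<gamma>) * (m + \<alpha>))"
    unfolding radius_def using L_pos by (simp add: powr_mult powr_powr)
  also have "L powr \<alpha> / (L powr (m + \<alpha>) * 2 powr (real n * (1 - \<gamma>) * (m + \<alpha>)))
      = L powr (- m) * 2 powr (- real n * (1 - \<gamma>) * (m + \<alpha>))"
  proof -
    have "L powr \<alpha> * inverse (L powr (m + \<alpha>)) = L powr (- m)"
      using L_pos by (simp add: powr_add powr_minus)
    moreover have "inverse (2 powr (real n * (1 - \<gamma>) * (m + \<alpha>))) = 2 powr (- real n * (1 - \<gamma>) * (m + \<alpha>))"
      by (simp add: powr_minus flip: minus_mult_left)
    ultimately show ?thesis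
      by (simp only: divide_inverse inverse_mult_distrib mult.assoc[symmetric])
  qed
  finally show ?thesis .
qed

definition far_coeff :: "nat \<Rightarrow> real" where
  "far_coeff l = Cs * 2 powr (m + \<alpha>) * L powr (- m) * 2 powr (- (real (i + l) - 1) * (1 - \<gamma>) * (m + \<alpha>))"

text \<open>A point of \<open>J (i + l) - J (i + l - 1)\<close> is at distance more than \<open>radius (i + l - 1)\<close> from \<open>x\<close>.\<close>
lemma far_part_le_suminf:
  "far_part z \<le> (\<Sum>l. ennreal (far_coeff l) * (ennreal (cmod (b z)) * indicator (J (i + l)) z))"
proof (cases "z \<in> J (i - 1)")
  case False
  define n where "n = (LEAST j. z \<in> J j)"
  have z_n: "z \<in> J n"
    unfolding n_def using J_cover by (rule LeastI_ex)
  have "i \<le> n"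
  proof (rule ccontr)
    assume "\<not> i \<le> n"
    then have "J n \<subseteq> J (i - 1)" by (intro J_mono) simp
    with z_n False show False by blast
  qed
  moreover have "z \<notin> J (n - 1)"
    using Least_le[of "\<lambda>j. z \<in> J j" "n - 1"] \<open>i \<le> n\<close> i_pos unfolding n_def by fastforce
  ultimately have "radius (n - 1) < linf_dist x z"
    unfolding radius_def using J_far[of "n - 1" z] by simp
  then have decay: "t powr \<alpha> / (t + linf_dist x z) powr (m + \<alpha>)
      \<le> L powr (- m) * 2 powr (- real (n - 1) * (1 - \<gamma>) * (m + \<alpha>))"
    by (rule decay_le_of_radius_less)
  have n_eq: "real (i + (n - i)) - 1 = real (n - 1)"
    using \<open>i \<le> n\<close> i_pos by simp
  have "Cs * 2 powr (m + \<alpha>) * (t powr \<alpha> / (t + linf_dist x z) powr (m + \<alpha>)) \<le> far_coeff (n - i)"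
    unfolding far_coeff_def mult.assoc n_eq using kernel_const_nonneg decay
    by (intro mult_left_mono) (simp_all add: mult.assoc)
  then have "far_part z \<le> ennreal (far_coeff (n - i)) * (ennreal (cmod (b z)) * indicator (J (i + (n - i))) z)"
    unfolding far_part_def tail_def using False z_n \<open>i \<le> n\<close> by (auto intro!: mult_right_mono ennreal_leI)
  also have "\<dots> \<le> (\<Sum>l. ennreal (far_coeff l) * (ennreal (cmod (b z)) * indicator (J (i + l)) z))"
    by (rule ennreal_term_le_suminf)
  finally show ?thesis .
qed (simp add: far_part_def tail_def)

lemma far_coeff_mass_eq:
  "far_coeff l * (K * (2 powr real (i + l) * L) powr m)
    = Cs * 2 powr (m + \<alpha>) * K * 2 powr ((1 - \<gamma>) * (m + \<alpha>)) * 2 powr (- real (i + l) * far_exponent)"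
proof -
  have "(2 powr real (i + l) * L) powr m = 2 powr (real (i + l) * m) * L powr m"
    by (simp add: powr_mult powr_powr)
  moreover have "L powr (- m) * L powr m = 1"
    using L_pos by (simp add: powr_minus)
  moreover have "2 powr (- (real (i + l) - 1) * (1 - \<gamma>) * (m + \<alpha>)) * 2 powr (real (i + l) * m)
      = 2 powr ((1 - \<gamma>) * (m + \<alpha>)) * 2 powr (- real (i + l) * far_exponent)"
    unfolding far_exponent_def by (simp add: algebra_simps flip: powr_add)
  ultimately show ?thesis
    unfolding far_coeff_def by (simp add: algebra_simps)
qed

lemma nn_integral_far_part_le: "(\<integral>\<^sup>+ z. far_part z \<partial>\<mu>) \<le> ennreal (far_const * 2 powr (- \<alpha> * real i / 2))"
proof -
  define c where "c = Cs * 2 powr (m + \<alpha>) * K * 2 powr ((1 - \<gamma>) * (m + \<alpha>))"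
  let ?q = "2 powr (- far_exponent)"
  have c: "0 \<le> c" unfolding c_def using kernel_const_nonneg mass_const_nonneg by simp
  have q: "0 \<le> ?q" "?q < 1" using two_powr_neg_exponents_less_one by auto
  have term_le: "ennreal (far_coeff l) * (\<integral>\<^sup>+ z. ennreal (cmod (b z)) * indicator (J (i + l)) z \<partial>\<mu>)
      \<le> ennreal (c * 2 powr (- \<alpha> * real i / 2) * ?q ^ l)" for l
  proof -
    have "real i * (\<alpha> / 2) \<le> real i * far_exponent"
      using far_exponent_ge by (intro mult_left_mono) auto
    then have "2 powr (- real i * far_exponent) \<le> 2 powr (- \<alpha> * real i / 2)"
      by (intro powr_mono) (auto simp: algebra_simps)
    then have "2 powr (- real (i + l) * far_exponent) \<le> 2 powr (- \<alpha> * real i / 2) * ?q ^ l"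
      using q by (simp add: two_powr_nat_power algebra_simps mult_right_mono flip: powr_add)
    then have "far_coeff l * (K * (2 powr real (i + l) * L) powr m) \<le> c * 2 powr (- \<alpha> * real i / 2) * ?q ^ l"
      unfolding far_coeff_mass_eq c_def[symmetric] using c by (simp add: mult_left_mono mult.assoc)
    moreover have "0 \<le> far_coeff l"
      unfolding far_coeff_def using kernel_const_nonneg by simp
    ultimately show ?thesis
      using mult_left_mono[OF J_mass[of "i + l"], of "ennreal (far_coeff l)"]
      by (simp add: ennreal_mult'[symmetric] ennreal_leI order_trans)
  qed
  have "(\<integral>\<^sup>+ z. far_part z \<partial>\<mu>)
      \<le> (\<integral>\<^sup>+ z. (\<Sum>l. ennreal (far_coeff l) * (ennreal (cmod (b z)) * indicator (J (i + l)) z)) \<partial>\<mu>)"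
    by (intro nn_integral_mono far_part_le_suminf)
  also have "\<dots> = (\<Sum>l. ennreal (far_coeff l) * (\<integral>\<^sup>+ z. ennreal (cmod (b z)) * indicator (J (i + l)) z \<partial>\<mu>))"
    by (simp add: nn_integral_suminf nn_integral_cmult)
  also have "\<dots> \<le> (\<Sum>l. ennreal (c * 2 powr (- \<alpha> * real i / 2) * ?q ^ l))"
    by (intro suminf_le summableI term_le)
  also have "\<dots> = ennreal (c * 2 powr (- \<alpha> * real i / 2) / (1 - ?q))"
    using c q by (intro suminf_ennreal_geometric) auto
  also have "c * 2 powr (- \<alpha> * real i / 2) / (1 - ?q) = far_const * 2 powr (- \<alpha> * real i / 2)"
    unfolding far_const_def c_def by simp
  finally show ?thesis .
qed

definition shell :: "nat \<Rightarrow> (real^'n) set" where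
  "shell n = {y. radius n < 2 * linf_dist x y \<and> 2 * linf_dist x y \<le> radius (Suc n)}"

definition shell_mass :: "nat \<Rightarrow> real" where
  "shell_mass n = K * (2 powr real (Suc n) * L) powr m"

definition shell_weight :: "nat \<Rightarrow> real" where
  "shell_weight n = t powr (- m) * (2 * 2 powr (- (real n * (1 - \<gamma>)))) powr (m * lam)"

lemma shell_borel [measurable]: "shell n \<in> sets borel"
  unfolding shell_def by measurable

lemma shell_exists:
  assumes "radius (i - 1) < 2 * linf_dist x y"
  shows "\<exists>n\<ge>i - 1. y \<in> shell n"
proof -
  let ?D = "2 * linf_dist x y"
  have "eventually (\<lambda>j. ?D / L \<le> 2 powr (real j * (1 - \<gamma>))) sequentially"
    using gamma_less_one by (intro eventually_le_two_powr) simp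
  then obtain j where "?D \<le> radius j"
    using eventually_happens'[OF trivial_limit_sequentially] L_pos
    unfolding radius_def by (auto simp: divide_le_eq mult.commute)
  then have ex: "\<exists>n. ?D \<le> radius (Suc n)"
    using radius_mono[of j "Suc j"] by (intro exI[of _ j]) simp
  define n where "n = (LEAST n. ?D \<le> radius (Suc n))"
  have upper: "?D \<le> radius (Suc n)"
    unfolding n_def using ex by (rule LeastI_ex)
  have "i - 1 \<le> n"
    using radius_mono[of "Suc n" "i - 1"] upper assms by (cases "i - 1 \<le> n") auto
  moreover have "radius n < ?D"
  proof (cases "n = i - 1")
    case False
    with \<open>i - 1 \<le> n\<close> obtain n' where "n = Suc n'" by (cases n) auto
    then show ?thesis using not_less_Least[of n' "\<lambda>n. ?D \<le> radius (Suc n)"] unfolding n_def by auto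
  qed (use assms in simp)
  ultimately show ?thesis using upper unfolding shell_def by blast
qed

text \<open>Only \<open>z \<notin> J (i - 1)\<close> contribute, and these are at distance more than \<open>radius (i - 1)\<close> from \<open>x\<close>.\<close>
lemma near_part_eq_zero:
  assumes "2 * linf_dist x y \<le> radius (i - 1)"
  shows "near_part y z = 0"
  using J_far[of "i - 1" z] assms unfolding near_part_def tail_def radius_def by auto

lemma nn_integral_near_part_le_potential:
  assumes "i - 1 \<le> n" "y \<in> shell n"
  shows "(\<integral>\<^sup>+ z. near_part y z \<partial>\<mu>) \<le> potential (Suc n) y"
  unfolding potential_def
proof (intro nn_integral_mono)
  fix z
  have "z \<in> J (Suc n)" if "linf_dist x z < 2 * linf_dist x y"
    using J_far[of "Suc n" z] assms that unfolding shell_def radius_def by fastforce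
  then show "near_part y z \<le> ennreal (kernel_bound y z) * ennreal (cmod (b z)) * indicator (J (Suc n)) z"
    unfolding near_part_def tail_def by (auto intro: mult_left_mono)
qed

lemma potential_le:
  assumes "i \<le> j"
  shows "potential j y \<le> ennreal (Cs * t powr (- m) * (K * (2 powr real j * L) powr m))"
proof -
  have "potential j y \<le> ennreal (Cs * t powr (- m)) * (\<integral>\<^sup>+ z. ennreal (cmod (b z)) * indicator (J j) z \<partial>\<mu>)"
    unfolding potential_def using kernel_bound_le
    by (subst nn_integral_cmult[symmetric]) (auto intro!: nn_integral_mono mult_right_mono ennreal_leI simp: mult.assoc)
  also have "\<dots> \<le> ennreal (Cs * t powr (- m)) * ennreal (K * (2 powr real j * L) powr m)"
    by (intro mult_left_mono J_mass assms) simp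
  finally show ?thesis
    using kernel_const_nonneg by (simp add: ennreal_mult'[symmetric])
qed

lemma weight_le_shell_weight:
  assumes "y \<in> shell n"
  shows "weight y \<le> shell_weight n"
proof -
  let ?d = "linf_dist x y"
  have d: "radius n < 2 * ?d" "0 < ?d" using assms radius_pos[of n] unfolding shell_def by auto
  have "t / (t + ?d) \<le> L / ?d"
    using t_pos t_le d by (simp add: frac_le)
  also have "\<dots> \<le> L / (radius n / 2)"
    using d radius_pos[of n] L_pos by (intro divide_left_mono) auto
  also have "\<dots> = 2 * 2 powr (- (real n * (1 - \<gamma>)))"
    unfolding radius_def powr_minus using L_pos by (simp add: field_simps)
  finally have "(t / (t + ?d)) powr (m * lam) \<le> (2 * 2 powr (- (real n * (1 - \<gamma>)))) powr (m * lam)"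
    using t_pos d m_less_m_lam exponent_pos by (intro powr_mono2) auto
  then show ?thesis
    unfolding weight_def shell_weight_def using t_pos
    by (simp add: powr_minus divide_inverse mult.commute mult_left_mono)
qed

definition near_majorant :: "nat \<Rightarrow> real^'n \<Rightarrow> ennreal" where
  "near_majorant l y = indicator (shell (i - 1 + l)) y
     * ennreal (shell_weight (i - 1 + l) * (Cs * t powr (- m)) * shell_mass (i - 1 + l))
     * potential (Suc (i - 1 + l)) y"

lemma near_majorant_borel [measurable]: "near_majorant l \<in> borel_measurable \<mu>"
  unfolding near_majorant_def by measurable

text \<open>On the shell \<open>n\<close>, one factor of \<open>(\<integral> near_part y)\<^sup>2\<close> is bounded uniformly and the other by the
  potential of \<open>J (n + 1)\<close>, whose integral over \<open>y\<close> is controlled by Fubini.\<close>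
lemma weight_near_part_le_suminf:
  "ennreal (weight y) * (\<integral>\<^sup>+ z. near_part y z \<partial>\<mu>)\<^sup>2 \<le> (\<Sum>l. near_majorant l y)"
proof (cases "radius (i - 1) < 2 * linf_dist x y")
  case True
  then obtain n where n: "i - 1 \<le> n" "y \<in> shell n" by (blast dest: shell_exists)
  let ?N = "\<integral>\<^sup>+ z. near_part y z \<partial>\<mu>"
  have N: "?N \<le> potential (Suc n) y"
    by (rule nn_integral_near_part_le_potential[OF n])
  also have "\<dots> \<le> ennreal (Cs * t powr (- m) * shell_mass n)"
    unfolding shell_mass_def using n i_pos by (intro potential_le) simp
  finally have N': "?N \<le> ennreal (Cs * t powr (- m) * shell_mass n)" .
  have "ennreal (weight y) * ?N\<^sup>2 = ennreal (weight y) * ?N * ?N"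
    by (simp add: power2_eq_square mult.assoc)
  also have "\<dots> \<le> ennreal (shell_weight n) * ennreal (Cs * t powr (- m) * shell_mass n) * potential (Suc n) y"
    using weight_le_shell_weight[OF n(2)] N N' by (intro mult_mono ennreal_leI) auto
  also have "\<dots> = near_majorant (n - (i - 1)) y"
    unfolding near_majorant_def using n
    by (simp add: shell_weight_def ennreal_mult' mult.assoc)
  also have "\<dots> \<le> (\<Sum>l. near_majorant l y)"
    by (rule ennreal_term_le_suminf)
  finally show ?thesis .
next
  case False
  then show ?thesis using near_part_eq_zero by (simp add: power2_eq_square)
qed

lemma shell_coeff_le:
  assumes n: "n = i - 1 + l"
  shows "shell_weight n * (Cs * t powr (- m)) * shell_mass n * (Cs * decay_const (m + \<alpha>) * shell_mass n)
    \<le> shell_const * 2 powr (- \<alpha> * real i) * (2 powr (- near_exponent)) ^ l"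
proof -
  define c where "c = Cs\<^sup>2 * decay_const (m + \<alpha>) * K\<^sup>2"
  define X where "X = t powr (- m) * L powr m"
  have c: "0 \<le> c" unfolding c_def using decay_const_nonneg[of "m + \<alpha>"] alpha_pos by simp
  have X: "0 \<le> X" "X \<le> 2 powr m"
  proof -
    have "X = (L / t) powr m"
      unfolding X_def powr_divide
      by (simp add: powr_minus divide_inverse mult.commute)
    also have "\<dots> \<le> 2 powr m"
      using t_pos L_pos t_gt exponent_pos by (intro powr_mono2) (auto simp: field_simps)
    finally show "X \<le> 2 powr m" .
  qed (simp add: X_def)
  have "shell_weight n * (Cs * t powr (- m)) * shell_mass n * (Cs * decay_const (m + \<alpha>) * shell_mass n)
      = c * X\<^sup>2 * (2 powr (m * lam + 2 * m) * 2 powr (- real n * near_exponent))"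
    unfolding shell_weight_def shell_mass_def c_def X_def near_exponent_def
    by (simp add: powr_mult powr_powr power2_eq_square algebra_simps flip: powr_add)
  also have "\<dots> \<le> c * (2 powr m)\<^sup>2 * (2 powr (m * lam + 2 * m)
      * (2 powr near_exponent * 2 powr (- \<alpha> * real i) * (2 powr (- near_exponent)) ^ l))"
  proof (intro mult_mono power_mono order_refl mult_left_mono)
    have n_eq: "real n = real i - 1 + real l" using n i_pos by simp
    have "2 powr (- real n * near_exponent)
        = 2 powr near_exponent * 2 powr (- real i * near_exponent) * (2 powr (- near_exponent)) ^ l"
      unfolding n_eq by (simp add: two_powr_nat_power algebra_simps flip: powr_add)
    moreover have "2 powr (- real i * near_exponent) \<le> 2 powr (- \<alpha> * real i)"
      using mult_left_mono[OF near_exponent_ge, of "real i"] by (intro powr_mono) (auto simp: mult.commute)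
    ultimately show "2 powr (- real n * near_exponent)
        \<le> 2 powr near_exponent * 2 powr (- \<alpha> * real i) * (2 powr (- near_exponent)) ^ l"
      by (simp add: mult_left_mono mult_right_mono)
  qed (use c X in auto)
  also have "\<dots> = shell_const * 2 powr (- \<alpha> * real i) * (2 powr (- near_exponent)) ^ l"
    unfolding shell_const_def c_def by (simp add: power2_eq_square algebra_simps flip: powr_add)
  finally show ?thesis .
qed

lemma nn_integral_near_majorant_le:
  "(\<integral>\<^sup>+ y. near_majorant l y \<partial>\<mu>) \<le> ennreal (shell_const * 2 powr (- \<alpha> * real i) * (2 powr (- near_exponent)) ^ l)"
proof -
  define n where "n = i - 1 + l"
  define c where "c = shell_weight n * (Cs * t powr (- m)) * shell_mass n"
  have c: "0 \<le> c" unfolding c_def shell_weight_def shell_mass_def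
    using kernel_const_nonneg mass_const_nonneg by simp
  have "(\<integral>\<^sup>+ y. near_majorant l y \<partial>\<mu>) \<le> (\<integral>\<^sup>+ y. ennreal c * potential (Suc n) y \<partial>\<mu>)"
    unfolding near_majorant_def n_def[symmetric] c_def[symmetric]
    by (intro nn_integral_mono) (auto simp: indicator_def)
  also have "\<dots> = ennreal c * (\<integral>\<^sup>+ y. potential (Suc n) y \<partial>\<mu>)"
    by (rule nn_integral_cmult) simp
  also have "\<dots> \<le> ennreal c * (ennreal (Cs * decay_const (m + \<alpha>)) * ennreal (shell_mass n))"
    using J_mass[of "Suc n"] i_pos unfolding n_def shell_mass_def
    by (intro mult_left_mono order_trans[OF nn_integral_potential_le]) auto
  also have "\<dots> = ennreal (c * (Cs * decay_const (m + \<alpha>) * shell_mass n))"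
    using c kernel_const_nonneg decay_const_nonneg[of "m + \<alpha>"] alpha_pos
    by (simp add: ennreal_mult'[symmetric] ennreal_mult''[symmetric])
  also have "\<dots> \<le> ennreal (shell_const * 2 powr (- \<alpha> * real i) * (2 powr (- near_exponent)) ^ l)"
    unfolding c_def by (intro ennreal_leI shell_coeff_le n_def)
  finally show ?thesis .
qed

lemma nn_integral_weight_le: "(\<integral>\<^sup>+ y. ennreal (weight y) \<partial>\<mu>) \<le> ennreal (decay_const (m * lam))"
proof -
  have "(\<integral>\<^sup>+ y. ennreal (weight y) \<partial>\<mu>)
      = ennreal (t powr (- m)) * (\<integral>\<^sup>+ y. ennreal ((t / (t + linf_dist x y)) powr (m * lam)) \<partial>\<mu>)"
    unfolding weight_def
    by (simp add: nn_integral_cmult[symmetric] ennreal_mult'[symmetric] powr_minus divide_inverse mult.commute)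
  also have "\<dots> \<le> ennreal (t powr (- m)) * ennreal (decay_const (m * lam) * t powr m)"
    using t_pos m_less_m_lam by (intro mult_left_mono nn_integral_decay_le) auto
  also have "\<dots> = ennreal (decay_const (m * lam))"
    using t_pos by (simp add: ennreal_mult'[symmetric] powr_minus field_simps)
  finally show ?thesis .
qed

lemma theta_tail_weight_le:
  "ennreal ((cmod (LINT z|\<mu>. s y z * tail z))\<^sup>2 * weight y)
    \<le> 2 * (ennreal (weight y) * (\<integral>\<^sup>+ z. far_part z \<partial>\<mu>)\<^sup>2) + 2 * (\<Sum>l. near_majorant l y)"
proof -
  let ?G = "\<integral>\<^sup>+ z. far_part z \<partial>\<mu>" and ?N = "\<integral>\<^sup>+ z. near_part y z \<partial>\<mu>"
  have w: "0 \<le> weight y" unfolding weight_def by simp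
  have "ennreal (cmod (LINT z|\<mu>. s y z * tail z)) \<le> ?G + ?N"
    using norm_integral_tail_le nn_integral_kernel_tail_le by (rule order_trans)
  then have "ennreal (weight y) * (ennreal (cmod (LINT z|\<mu>. s y z * tail z)))\<^sup>2 \<le> ennreal (weight y) * (?G + ?N)\<^sup>2"
    by (intro mult_left_mono power_mono) simp_all
  then have "ennreal ((cmod (LINT z|\<mu>. s y z * tail z))\<^sup>2 * weight y) \<le> ennreal (weight y) * (?G + ?N)\<^sup>2"
    using w by (simp add: ennreal_mult'' mult.commute flip: ennreal_power)
  also have "\<dots> \<le> ennreal (weight y) * (2 * ?G\<^sup>2 + 2 * ?N\<^sup>2)"
    by (intro mult_left_mono ennreal_add_square_le) simp
  also have "\<dots> \<le> 2 * (ennreal (weight y) * ?G\<^sup>2) + 2 * (\<Sum>l. near_majorant l y)"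
    using weight_near_part_le_suminf[of y] by (simp add: distrib_left mult_left_mono mult.left_commute)
  finally show ?thesis .
qed

lemma nn_integral_theta_tail_le:
  "(\<integral>\<^sup>+ y. ennreal ((cmod (LINT z|\<mu>. s y z * tail z))\<^sup>2 * weight y) \<partial>\<mu>)
    \<le> ennreal (off_diagonal_const * 2 powr (- \<alpha> * real i))"
proof -
  let ?G = "\<integral>\<^sup>+ z. far_part z \<partial>\<mu>" and ?e = "2 powr (- \<alpha> * real i)" and ?q = "2 powr (- near_exponent)"
  have e: "(2 powr (- (\<alpha> * real i / 2)))\<^sup>2 = 2 powr (- (\<alpha> * real i))"
    by (simp add: power2_eq_square flip: powr_add)
  have "(\<integral>\<^sup>+ y. ennreal ((cmod (LINT z|\<mu>. s y z * tail z))\<^sup>2 * weight y) \<partial>\<mu>)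
      \<le> (\<integral>\<^sup>+ y. 2 * (ennreal (weight y) * ?G\<^sup>2) + 2 * (\<Sum>l. near_majorant l y) \<partial>\<mu>)"
    by (intro nn_integral_mono theta_tail_weight_le)
  also have "\<dots> = 2 * ((\<integral>\<^sup>+ y. ennreal (weight y) \<partial>\<mu>) * ?G\<^sup>2) + 2 * (\<Sum>l. \<integral>\<^sup>+ y. near_majorant l y \<partial>\<mu>)"
    unfolding weight_def
    by (simp add: nn_integral_add nn_integral_cmult nn_integral_multc nn_integral_suminf)
  also have "\<dots> \<le> 2 * (ennreal (decay_const (m * lam)) * (ennreal (far_const * 2 powr (- \<alpha> * real i / 2)))\<^sup>2)
      + 2 * (\<Sum>l. ennreal (shell_const * ?e * ?q ^ l))"
    by (intro add_mono mult_left_mono mult_mono power_mono suminf_le summableI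
        nn_integral_weight_le nn_integral_far_part_le nn_integral_near_majorant_le) simp_all
  also have "\<dots> = ennreal (off_diagonal_const * ?e)"
  proof -
    define a where "a = decay_const (m * lam) * (far_const\<^sup>2 * ?e)"
    define c where "c = shell_const * ?e / (1 - ?q)"
    have nonneg: "0 \<le> a" "0 \<le> c"
      unfolding a_def c_def using decay_const_nonneg[OF m_less_m_lam] shell_const_nonneg
        two_powr_neg_exponents_less_one by simp_all
    have sq: "(ennreal (far_const * 2 powr (- \<alpha> * real i / 2)))\<^sup>2 = ennreal (far_const\<^sup>2 * ?e)"
      using far_const_nonneg by (simp add: ennreal_power power_mult_distrib e)
    have geo: "(\<Sum>l. ennreal (shell_const * ?e * ?q ^ l)) = ennreal c"
      unfolding c_def using shell_const_nonneg two_powr_neg_exponents_less_one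
      by (intro suminf_ennreal_geometric) auto
    have prod: "ennreal (decay_const (m * lam)) * ennreal (far_const\<^sup>2 * ?e) = ennreal a"
      unfolding a_def using decay_const_nonneg[OF m_less_m_lam] by (simp add: ennreal_mult)
    have sum: "2 * ennreal a + 2 * ennreal c = ennreal (2 * a + 2 * c)"
      using nonneg by (simp add: ennreal_mult)
    have "2 * a + 2 * c = off_diagonal_const * ?e"
      unfolding a_def c_def off_diagonal_const_def by (simp add: algebra_simps)
    then show ?thesis unfolding sq geo prod sum by simp
  qed
  finally show ?thesis .
qed

end

lemma (in off_diagonal_constants) good_cube_tail_estimate:
  assumes "dyadic_grid \<beta>"
    and R: "R \<in> dy_grid \<beta>" "dy_good \<beta> r \<gamma> R" and x: "x \<in> R" and i: "r + 1 \<le> i"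
    and t: "side \<beta> R / 2 < t" "t \<le> side \<beta> R"
    and b_meas: "b \<in> borel_measurable \<mu>"
    and mass: "\<And>j. i \<le> j \<Longrightarrow>
      (\<integral>\<^sup>+ z. ennreal (cmod (b z)) * indicator (dy_anc \<beta> R j) z \<partial>\<mu>) \<le> ennreal (K * side \<beta> (dy_anc \<beta> R j) powr m)"
    and s_meas: "\<And>y. s t y \<in> borel_measurable \<mu>"
    and s_le: "\<And>y z. cmod (s t y z) \<le> Cs * t powr \<alpha> / (t + linf_dist y z) powr (m + \<alpha>)"
  shows "(\<integral>\<^sup>+ y. ennreal ((cmod (theta \<mu> s t (\<lambda>z. if z \<in> dy_anc \<beta> R (i - 1) then 0 else b z) y))\<^sup>2
      * (t / (t + linf_dist x y)) powr (m * lam) / t powr m) \<partial>\<mu>)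
    \<le> ennreal (off_diagonal_const * 2 powr (- \<alpha> * real i))"
proof -
  interpret dyadic_grid \<beta> by fact
  interpret off_diagonal_estimate \<mu> C m Cs K \<alpha> \<gamma> lam x "side \<beta> R" t i "dy_anc \<beta> R" b "s t"
  proof unfold_locales
    show "dy_anc \<beta> R j \<in> sets borel" for j
      using dy_grid_borel dy_anc_in_grid R(1) by blast
    show "dy_anc \<beta> R j \<subseteq> dy_anc \<beta> R j'" if "j \<le> j'" for j j'
      using dy_anc_mono[OF R(1) that] .
    show "\<exists>j. z \<in> dy_anc \<beta> R j" for z
      using good_anc_cover[OF R x gamma_less_one] .
    show "side \<beta> R * 2 powr (real j * (1 - \<gamma>)) < linf_dist x z" if "i - 1 \<le> j" "z \<notin> dy_anc \<beta> R j" for j z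
      using good_far_outside_anc[OF R _ x _ gamma_less_one] that i by simp
    show "(\<integral>\<^sup>+ z. ennreal (cmod (b z)) * indicator (dy_anc \<beta> R j) z \<partial>\<mu>)
        \<le> ennreal (K * (2 powr real j * side \<beta> R) powr m)" if "i \<le> j" for j
      using mass[OF that] unfolding side_anc[OF R(1)] .
  qed (use assms side_pos[of R] in auto)
  show ?thesis
    using nn_integral_theta_tail_le unfolding theta_def tail_def weight_def by simp
qed

lemma (in off_diagonal_constants) good_cube_stop_parent_estimate:
  assumes "dyadic_grid \<beta>" and K: "K = (1 + stopping_Lp_bound A p) * C" and p: "1 \<le> p"
    and b_meas: "\<And>Q. Q \<in> dy_grid \<beta> \<Longrightarrow> b Q \<in> borel_measurable \<mu>"
    and b_Lp: "\<And>Q. Q \<in> dy_grid \<beta> \<Longrightarrow> (\<integral>\<^sup>+ z. ennreal (cmod (b Q z) powr p) \<partial>\<mu>) \<le> ennreal (A * measure \<mu> Q)"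
    and Qs: "Qs \<in> dy_grid \<beta>"
    and R: "R \<in> dy_grid \<beta>" "dy_good \<beta> r \<gamma> R" and x: "x \<in> R" and i: "r + 1 \<le> i" "dy_anc \<beta> R i \<subseteq> Qs"
    and t: "side \<beta> R / 2 < t" "t \<le> side \<beta> R"
    and s_meas: "\<And>y. s t y \<in> borel_measurable \<mu>"
    and s_le: "\<And>y z. cmod (s t y z) \<le> Cs * t powr \<alpha> / (t + linf_dist y z) powr (m + \<alpha>)"
  shows "(\<integral>\<^sup>+ y. ennreal ((cmod (theta \<mu> s t
      (\<lambda>z. if z \<in> dy_anc \<beta> R (i - 1) then 0 else b (stop_parent \<mu> \<beta> b A p Qs (dy_anc \<beta> R i)) z) y))\<^sup>2
      * (t / (t + linf_dist x y)) powr (m * lam) / t powr m) \<partial>\<mu>)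
    \<le> ennreal (off_diagonal_const * 2 powr (- \<alpha> * real i))"
proof -
  interpret dyadic_power_growth \<beta> \<mu> C m
    using assms(1) by (intro_locales) (simp_all add: dyadic_grid_def power_growth_measure_axioms)
  have "stop_parent \<mu> \<beta> b A p Qs (dy_anc \<beta> R i) \<in> dy_grid \<beta>"
    using stop_parent_in_family[OF Qs dy_anc_in_grid[OF R(1)] i(2)] stop_family_subset_grid[OF Qs] by blast
  moreover have "(\<integral>\<^sup>+ z. ennreal (cmod (b (stop_parent \<mu> \<beta> b A p Qs (dy_anc \<beta> R i)) z))
      * indicator (dy_anc \<beta> R j) z \<partial>\<mu>) \<le> ennreal (K * side \<beta> (dy_anc \<beta> R j) powr m)" if "i \<le> j" for j
    unfolding K using p b_meas b_Lp dy_anc_mono[OF R(1) that]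
    by (intro nn_integral_stop_parent_le Qs dy_anc_in_grid R(1) i(2)) auto
  ultimately show ?thesis
    using assms by (intro good_cube_tail_estimate) auto
qed

text \<open>Only the size bound of \<open>s_t\<close>, the \<open>L^p\<close> bounds of the \<open>b_Q\<close>, \<open>\<alpha> \<le> m (\<lambda> - 2) / 2\<close> and
  \<open>\<gamma> \<le> \<alpha> / (2 (m + \<alpha>))\<close> enter.\<close>
theorem lemma4p4:
  fixes \<mu> :: "(real^'n) measure"
    and m C\<^sub>\<mu> C\<^sub>s lam \<alpha> \<gamma> p A :: real
    and s :: "real \<Rightarrow> real^'n \<Rightarrow> real^'n \<Rightarrow> complex"
    and \<beta> :: "int \<Rightarrow> real^'n"
    and r :: nat and sc :: int
    and b :: "(real^'n) set \<Rightarrow> real^'n \<Rightarrow> complex"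
    and Qs :: "(real^'n) set"
  assumes m_pos: "m > 0"
    and borel_meas: "sets \<mu> = sets borel"
    and growth: "\<And>x \<rho>. \<rho> > 0 \<Longrightarrow> emeasure \<mu> (linf_ball x \<rho>) \<le> ennreal (C\<^sub>\<mu> * \<rho> powr m)"
    and lam: "lam > 2"
    and alpha: "\<alpha> > 0" "\<alpha> \<le> m * (lam - 2) / 2"
    and s_meas: "\<And>t y. t > 0 \<Longrightarrow> s t y \<in> borel_measurable \<mu>"
    and s_size: "\<And>t x y. t > 0 \<Longrightarrow>
        cmod (s t x y) \<le> C\<^sub>s * t powr \<alpha> / (t + linf_dist x y) powr (m + \<alpha>)"
    and s_hoelder: "\<And>t x y y'. t > 0 \<Longrightarrow> linf_dist y y' < t / 2 \<Longrightarrow>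
        cmod (s t x y - s t x y') \<le> C\<^sub>s * linf_dist y y' powr \<alpha> / (t + linf_dist x y) powr (m + \<alpha>)"
    and beta01: "\<And>j i. \<beta> j $ i \<in> {0, 1}"
    and r_ge: "r \<ge> 1"
    and gamma: "0 < \<gamma>" "\<gamma> < 1/2" "\<gamma> \<le> \<alpha> / (2 * (m + \<alpha>))" "m * \<gamma> / (1 - \<gamma>) \<le> \<alpha> / 4"
    and p: "1 < p" "p \<le> 2"
    and b_meas: "\<And>Q. Q \<in> dy_grid \<beta> \<Longrightarrow> b Q \<in> borel_measurable \<mu>"
    and b_supp: "\<And>Q z. Q \<in> dy_grid \<beta> \<Longrightarrow> z \<notin> Q \<Longrightarrow> b Q z = 0"
    and b_avg: "\<And>Q. Q \<in> dy_grid \<beta> \<Longrightarrow> measure \<mu> Q > 0 \<Longrightarrow> avg \<mu> Q (b Q) = 1"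
    and b_Lp: "\<And>Q. Q \<in> dy_grid \<beta> \<Longrightarrow>
        (\<integral>\<^sup>+ z. ennreal (cmod (b Q z) powr p) \<partial>\<mu>) \<le> ennreal (A * measure \<mu> Q)"
    and Qs: "Qs \<in> dy_level_grid \<beta> sc"
  shows "\<exists>C. \<forall>R i x t.
     R \<in> dy_grid \<beta> \<and> dy_good \<beta> r \<gamma> R \<and> i \<ge> r + 1 \<and> dy_anc \<beta> R i \<subseteq> Qs \<and>
     x \<in> R \<and> side \<beta> R / 2 < t \<and> t \<le> side \<beta> R \<longrightarrow>
     (\<integral>\<^sup>+ y. ennreal ((cmod (theta \<mu> s t
          (\<lambda>z. if z \<in> dy_anc \<beta> R (i - 1) then 0 else b (stop_parent \<mu> \<beta> b A p Qs (dy_anc \<beta> R i)) z) y))\<^sup>2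
        * (t / (t + linf_dist x y)) powr (m * lam) / t powr m) \<partial>\<mu>)
     \<le> ennreal ((C * 2 powr (- \<alpha> * real i / 2))\<^sup>2)"
proof -
  interpret dyadic_grid \<beta> using beta01 by unfold_locales
  interpret power_growth_measure \<mu> "max C\<^sub>\<mu> 0" m
    using power_growth_measure_max_const[OF borel_meas m_pos growth] .
  have "0 \<le> C\<^sub>s / (1 + linf_dist 0 (0::real^'n)) powr (m + \<alpha>)"
    using order_trans[OF norm_ge_zero s_size[of 1 0 0]] by simp
  then have "0 \<le> C\<^sub>s"
    using linf_dist_nonneg[of 0 "0::real^'n"] by (simp add: zero_le_divide_iff)
  then interpret off_diagonal_constants \<mu> "max C\<^sub>\<mu> 0" m C\<^sub>s "(1 + stopping_Lp_bound A p) * max C\<^sub>\<mu> 0" \<alpha> \<gamma> lam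
    using alpha gamma stopping_Lp_bound_nonneg[of A p] by unfold_locales auto
  have Qs_grid: "Qs \<in> dy_grid \<beta>" using Qs unfolding dy_grid_def by blast
  show ?thesis
  proof (intro exI[of _ "sqrt off_diagonal_const"] allI impI, elim conjE)
    fix R i x t
    assume "R \<in> dy_grid \<beta>" "dy_good \<beta> r \<gamma> R" "r + 1 \<le> i" "dy_anc \<beta> R i \<subseteq> Qs"
      and "x \<in> R" and t: "side \<beta> R / 2 < t" "t \<le> side \<beta> R"
    moreover have "0 < t" using t side_pos[of R] by linarith
    ultimately have "(\<integral>\<^sup>+ y. ennreal ((cmod (theta \<mu> s t
          (\<lambda>z. if z \<in> dy_anc \<beta> R (i - 1) then 0 else b (stop_parent \<mu> \<beta> b A p Qs (dy_anc \<beta> R i)) z) y))\<^sup>2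
        * (t / (t + linf_dist x y)) powr (m * lam) / t powr m) \<partial>\<mu>)
      \<le> ennreal (off_diagonal_const * 2 powr (- \<alpha> * real i))"
      using p b_meas b_Lp Qs_grid s_meas s_size dyadic_grid_axioms
      by (intro good_cube_stop_parent_estimate) auto
    then show "(\<integral>\<^sup>+ y. ennreal ((cmod (theta \<mu> s t
          (\<lambda>z. if z \<in> dy_anc \<beta> R (i - 1) then 0 else b (stop_parent \<mu> \<beta> b A p Qs (dy_anc \<beta> R i)) z) y))\<^sup>2
        * (t / (t + linf_dist x y)) powr (m * lam) / t powr m) \<partial>\<mu>)
      \<le> ennreal ((sqrt off_diagonal_const * 2 powr (- \<alpha> * real i / 2))\<^sup>2)"
      using off_diagonal_const_nonneg by (simp add: power_mult_distrib two_powr_nat_power)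
  qed
qed

end
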